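(* Let $q=2$, $r\ge3$ and $m=2r$. Let $D=\{x\in\mathbb{F}_{2^m}:\mathrm{Tr}_{2^r/2}(x^{2^r+1})=0\}$ and $\overline{\mathcal{C}_D}=\{(\mathrm{Tr}_{2^m/2}(bx)+c)_{x\in D}: b\in\mathbb{F}_{2^m},\ c\in\mathbb{F}_2\}$. Then $\overline{\mathcal{C}_D}$ is a $(2^{r-1}(2^r-1),\ m+1,\ 2^{r-1}(2^{r-1}-1),\ 2;\ 3)$-LRC and $\overline{\mathcal{C}_D}^{\perp}$ is a $(2^{r-1}(2^r-1),\ 2^{r-1}(2^r-1)-m-1,\ 4,\ 2;\ 2^{r-1}(2^{r-1}-1)-1)$-LRC. In particular, $\overline{\mathcal{C}_D}^{\perp}$ is $k$-optimal or almost $k$-optimal.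
   Context: For an $[n,k,d]$ linear code $\mathcal{C}$ over $\mathbb{F}_q$ with coordinates indexed by $\{0,\dots,n-1\}$, coordinate $i$ has a repair set $R_i\subseteq\{0,\dots,n-1\}\setminus\{i\}$ of size $r$ if there is a function $f_i$ with $c_i=f_i(\mathbf{c}_{R_i})$ for all $\mathbf{c}\in\mathcal{C}$; the locality of $\mathcal{C}$ is the smallest $r$ such that every coordinate has a repair set of size $r$, and then $\mathcal{C}$ is called an $(n,k,d,q;r)$-LRC. The Cadambe–Mazumdar bound states $k\le\min_{t\in\mathbb{Z}^+}[rt+k^{(q)}_{opt}(n-t(r+1),d)]$, where $k^{(q)}_{opt}(n,d)$ is the largest dimension of a $q$-ary linear code of length $n$ and minimum distance $d$. An LRC is $k$-optimal if it meets this bound with equality, and almost $k$-optimal if $k$ equals the bound minus one. *)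

theory Defs
  imports Main "HOL-Library.Z2"
begin

definition words :: "'i set \<Rightarrow> ('i \<Rightarrow> 'f::field) set" where
  "words I = {v. \<forall>i. i \<notin> I \<longrightarrow> v i = 0}"

definition linear_code :: "'i set \<Rightarrow> ('i \<Rightarrow> 'f::field) set \<Rightarrow> bool" where
  "linear_code I C \<longleftrightarrow> finite I \<and> C \<subseteq> words I \<and> (\<lambda>_. 0) \<in> C \<and>
     (\<forall>u\<in>C. \<forall>v\<in>C. (\<lambda>i. u i + v i) \<in> C) \<and>
     (\<forall>a. \<forall>v\<in>C. (\<lambda>i. a * v i) \<in> C)"

definition hweight :: "'i set \<Rightarrow> ('i \<Rightarrow> 'f::field) \<Rightarrow> nat" where
  "hweight I v = card {i\<in>I. v i \<noteq> 0}"

definition min_dist :: "'i set \<Rightarrow> ('i \<Rightarrow> 'f::field) set \<Rightarrow> nat" where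
  "min_dist I C = Min {hweight I v | v. v \<in> C \<and> v \<noteq> (\<lambda>_. 0)}"

definition is_code :: "'i set \<Rightarrow> ('i \<Rightarrow> 'f::field) set \<Rightarrow> nat \<Rightarrow> nat \<Rightarrow> nat \<Rightarrow> bool" where
  "is_code I C n k d \<longleftrightarrow> linear_code I C \<and> card I = n \<and> card C = card (UNIV :: 'f set) ^ k \<and>
     min_dist I C = d"

definition dual_code :: "'i set \<Rightarrow> ('i \<Rightarrow> 'f::field) set \<Rightarrow> ('i \<Rightarrow> 'f) set" where
  "dual_code I C = {v \<in> words I. \<forall>c\<in>C. (\<Sum>i\<in>I. v i * c i) = 0}"

definition repair_set :: "'i set \<Rightarrow> ('i \<Rightarrow> 'f::field) set \<Rightarrow> 'i \<Rightarrow> 'i set \<Rightarrow> bool" where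
  "repair_set I C i R \<longleftrightarrow> R \<subseteq> I - {i} \<and>
     (\<exists>f. \<forall>c\<in>C. c i = f (\<lambda>j. if j \<in> R then c j else 0))"

definition locality :: "'i set \<Rightarrow> ('i \<Rightarrow> 'f::field) set \<Rightarrow> nat" where
  "locality I C = (LEAST r. \<forall>i\<in>I. \<exists>R. repair_set I C i R \<and> card R = r)"

definition is_LRC :: "'i set \<Rightarrow> ('i \<Rightarrow> 'f::field) set \<Rightarrow> nat \<Rightarrow> nat \<Rightarrow> nat \<Rightarrow> nat \<Rightarrow> nat \<Rightarrow> bool" where
  "is_LRC I C n k d q r \<longleftrightarrow> is_code I C n k d \<and> card (UNIV :: 'f set) = q \<and> locality I C = r"

definition k_opt :: "'f::field itself \<Rightarrow> nat \<Rightarrow> nat \<Rightarrow> nat" where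
  "k_opt _ n d = Max {k. \<exists>C :: (nat \<Rightarrow> 'f) set. linear_code {0..<n} C \<and>
       card C = card (UNIV :: 'f set) ^ k \<and> (\<forall>v\<in>C. v \<noteq> (\<lambda>_. 0) \<longrightarrow> d \<le> hweight {0..<n} v)}"

definition CM_bound :: "'f::field itself \<Rightarrow> nat \<Rightarrow> nat \<Rightarrow> nat \<Rightarrow> nat" where
  "CM_bound F n d r = Inf ((\<lambda>t. r * t + k_opt F (n - t * (r + 1)) d) ` {t. t \<ge> 1})"

definition k_optimal :: "'i set \<Rightarrow> ('i \<Rightarrow> 'f::field) set \<Rightarrow> bool" where
  "k_optimal I C \<longleftrightarrow> (\<exists>n k d r. is_LRC I C n k d (card (UNIV :: 'f set)) r \<and> k = CM_bound TYPE('f) n d r)"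

definition almost_k_optimal :: "'i set \<Rightarrow> ('i \<Rightarrow> 'f::field) set \<Rightarrow> bool" where
  "almost_k_optimal I C \<longleftrightarrow>
     (\<exists>n k d r. is_LRC I C n k d (card (UNIV :: 'f set)) r \<and> k + 1 = CM_bound TYPE('f) n d r)"

text \<open>Absolute trace Tr_{2^m/2}(y) = sum_{i<m} y^(2^i) and relative trace to F_2 of F_{2^r}.\<close>
definition trace2 :: "nat \<Rightarrow> 'a::field \<Rightarrow> 'a" where
  "trace2 m y = (\<Sum>i<m. y ^ (2 ^ i))"

text \<open>Identification of the prime field {0,1} of 'a with bit.\<close>
definition to_bit :: "'a::field \<Rightarrow> bit" where
  "to_bit y = (if y = 0 then 0 else 1)"

definition defining_set :: "nat \<Rightarrow> 'a::field set" where
  "defining_set r = {x. trace2 r (x ^ (2 ^ r + 1)) = 0}"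

definition code_CD_bar :: "nat \<Rightarrow> 'a::field set \<Rightarrow> ('a \<Rightarrow> bit) set" where
  "code_CD_bar m D = {(\<lambda>x. if x \<in> D then to_bit (trace2 m (b * x)) + c else 0) | b c. True}"

end

theory Submission
  imports Defs "HOL-Computational_Algebra.Primes" "HOL-Computational_Algebra.Polynomial"
begin

declare add_bit_eq_xor [simp del] mult_bit_eq_and [simp del]

lemma UNIV_bit: "(UNIV :: bit set) = {0, 1}"
  by (auto intro: bit.exhaust)

lemma card_UNIV_bit: "card (UNIV :: bit set) = 2"
  by (simp add: UNIV_bit)

lemma bit_add_self [simp]: "(x :: bit) + x = 0"
  by (cases x) simp_all

lemma bit_add_eq_0_iff [simp]: "(x :: bit) + y = 0 \<longleftrightarrow> x = y"
  by (cases x; cases y) simp_all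

lemma of_nat_bit: "(of_nat n :: bit) = (if even n then 0 else 1)"
  by (induction n) auto

definition unit_word :: "'i \<Rightarrow> 'i \<Rightarrow> 'f::zero_neq_one" where
  "unit_word i = (\<lambda>j. if j = i then 1 else 0)"

lemma unit_word_in_words: "i \<in> I \<Longrightarrow> unit_word i \<in> words I"
  by (simp add: unit_word_def words_def)

lemma sum_unit_word_mult:
  fixes c :: "'i \<Rightarrow> 'f::semiring_1"
  shows "finite I \<Longrightarrow> i \<in> I \<Longrightarrow> (\<Sum>j\<in>I. unit_word i j * c j) = c i"
proof -
  assume "finite I" "i \<in> I"
  have "(\<Sum>j\<in>I. unit_word i j * c j) = (\<Sum>j\<in>I. if j = i then c j else 0)"
    by (rule sum.cong) (simp_all add: unit_word_def)
  with \<open>finite I\<close> \<open>i \<in> I\<close> show ?thesis by simp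
qed

lemma bij_betw_support_words:
  "bij_betw (\<lambda>v. {i. v i = 1}) (words I :: ('i \<Rightarrow> bit) set) (Pow I)"
proof (rule bij_betw_byWitness[where f' = "\<lambda>S i. if i \<in> S then 1 else 0"])
  show "\<forall>v\<in>words I. (\<lambda>i. if i \<in> {i. v i = 1} then 1 else 0) = (v :: 'i \<Rightarrow> bit)"
    by (auto simp: fun_eq_iff)
qed (auto simp: words_def)

lemma card_words_bit: "finite I \<Longrightarrow> card (words I :: ('i \<Rightarrow> bit) set) = 2 ^ card I"
  using bij_betw_same_card[OF bij_betw_support_words[of I]] by (simp add: card_Pow)

lemma finite_words_bit: "finite I \<Longrightarrow> finite (words I :: ('i \<Rightarrow> bit) set)"
  using bij_betw_finite[OF bij_betw_support_words[of I]] by simp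

lemma linear_codeD:
  assumes "linear_code I C"
  shows linear_code_finite_index: "finite I"
    and linear_code_subset_words: "C \<subseteq> words I"
    and linear_code_zero: "(\<lambda>_. 0) \<in> C"
    and linear_code_add: "u \<in> C \<Longrightarrow> v \<in> C \<Longrightarrow> (\<lambda>i. u i + v i) \<in> C"
    and linear_code_smult: "v \<in> C \<Longrightarrow> (\<lambda>i. a * v i) \<in> C"
  using assms unfolding linear_code_def by blast+

lemma finite_linear_code_bit: "linear_code I (C :: ('i \<Rightarrow> bit) set) \<Longrightarrow> finite C"
  by (rule finite_subset[OF linear_code_subset_words finite_words_bit[OF linear_code_finite_index]])

section \<open>The dual code\<close>

lemma linear_code_dual_code:
  fixes C :: "('i \<Rightarrow> 'f::field) set"
  assumes "finite I"
  shows "linear_code I (dual_code I C)"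
  unfolding linear_code_def
proof (intro conjI ballI allI)
  fix u v assume "u \<in> dual_code I C" "v \<in> dual_code I C"
  then show "(\<lambda>i. u i + v i) \<in> dual_code I C"
    by (simp add: dual_code_def words_def distrib_right sum.distrib)
next
  fix a :: 'f and v assume "v \<in> dual_code I C"
  then show "(\<lambda>i. a * v i) \<in> dual_code I C"
    by (simp add: dual_code_def words_def mult.assoc flip: sum_distrib_left)
qed (auto simp: assms dual_code_def words_def)

definition bit_sign :: "bit \<Rightarrow> int" where
  "bit_sign x = (if x = 0 then 1 else -1)"

lemma bit_sign_add_1: "bit_sign (x + 1) = - bit_sign x"
  by (cases x) (simp_all add: bit_sign_def)

lemma sum_eq_0_if_bij_negates:
  fixes f :: "'b \<Rightarrow> int"
  assumes "bij_betw g A A" "\<And>x. x \<in> A \<Longrightarrow> f (g x) = - f x"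
  shows "sum f A = 0"
proof -
  have "sum f A = sum (f \<circ> g) A"
    using sum.reindex_bij_betw[OF assms(1), of f] by simp
  also have "\<dots> = - sum f A"
    using assms(2) by (simp add: sum_negf)
  finally show ?thesis by simp
qed

text \<open>Orthogonality relations for the characters \<open>v \<mapsto> (-1)^<v,c>\<close>.\<close>

lemma sum_words_bit_sign_inner:
  fixes c :: "'i \<Rightarrow> bit"
  assumes I: "finite I" and c: "c \<in> words I"
  shows "(\<Sum>v\<in>words I. bit_sign (\<Sum>i\<in>I. v i * c i)) = (if c = (\<lambda>_. 0) then 2 ^ card I else 0)"
proof (cases "c = (\<lambda>_. 0)")
  case True
  then show ?thesis
    using card_words_bit[OF I] by (simp add: bit_sign_def)
next
  case False
  then obtain j where cj: "c j = 1" by (auto simp: fun_eq_iff)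
  with c have j: "j \<in> I" by (auto simp: words_def)
  let ?flip = "\<lambda>v i. v i + (unit_word j i :: bit)"
  have "bij_betw ?flip (words I) (words I)"
    by (rule bij_betw_byWitness[where f' = ?flip])
       (auto simp: words_def unit_word_def add.assoc j)
  moreover have "bit_sign (\<Sum>i\<in>I. ?flip v i * c i) = - bit_sign (\<Sum>i\<in>I. v i * c i)" for v
    using sum_unit_word_mult[OF I j, of c] cj
    by (simp add: distrib_right sum.distrib bit_sign_add_1)
  ultimately have "(\<Sum>v\<in>words I. bit_sign (\<Sum>i\<in>I. v i * c i)) = 0"
    by (intro sum_eq_0_if_bij_negates[where f = "\<lambda>v. bit_sign (\<Sum>i\<in>I. v i * c i)"])
  with False show ?thesis by simp
qed

lemma sum_code_bit_sign_inner:
  fixes C :: "('i \<Rightarrow> bit) set"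
  assumes C: "linear_code I C" and v: "v \<in> words I"
  shows "(\<Sum>c\<in>C. bit_sign (\<Sum>i\<in>I. v i * c i)) = (if v \<in> dual_code I C then int (card C) else 0)"
proof (cases "v \<in> dual_code I C")
  case True
  then show ?thesis by (simp add: dual_code_def bit_sign_def)
next
  case False
  with v obtain c0 where c0: "c0 \<in> C" "(\<Sum>i\<in>I. v i * c0 i) = 1"
    by (auto simp: dual_code_def)
  let ?shift = "\<lambda>c i. c i + c0 i"
  have "bij_betw ?shift C C"
    by (rule bij_betw_byWitness[where f' = ?shift])
       (auto simp: linear_code_add[OF C] c0 add.assoc)
  moreover have "bit_sign (\<Sum>i\<in>I. v i * ?shift c i) = - bit_sign (\<Sum>i\<in>I. v i * c i)" for c
    using c0(2) by (simp add: distrib_left sum.distrib bit_sign_add_1)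
  ultimately have "(\<Sum>c\<in>C. bit_sign (\<Sum>i\<in>I. v i * c i)) = 0"
    by (intro sum_eq_0_if_bij_negates[where f = "\<lambda>c. bit_sign (\<Sum>i\<in>I. v i * c i)"])
  with False show ?thesis by simp
qed

theorem card_mult_card_dual_code:
  fixes C :: "('i \<Rightarrow> bit) set"
  assumes C: "linear_code I C"
  shows "card C * card (dual_code I C) = 2 ^ card I"
proof -
  have I: "finite I" and CW: "C \<subseteq> words I" and C0: "(\<lambda>_. 0) \<in> C"
    using linear_codeD(1-3)[OF C] .
  have fin: "finite C" "finite (words I :: ('i \<Rightarrow> bit) set)"
    using finite_linear_code_bit[OF C] finite_words_bit[OF I] .
  let ?\<chi> = "\<lambda>v c. bit_sign (\<Sum>i\<in>I. v i * c i)"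
  have "int (2 ^ card I) = (\<Sum>c\<in>C. if c = (\<lambda>_. 0) then 2 ^ card I else 0)"
    using C0 fin by simp
  also have "\<dots> = (\<Sum>c\<in>C. \<Sum>v\<in>words I. ?\<chi> v c)"
    using CW by (intro sum.cong refl sum_words_bit_sign_inner[OF I, symmetric]) auto
  also have "\<dots> = (\<Sum>v\<in>words I. \<Sum>c\<in>C. ?\<chi> v c)"
    by (rule sum.swap)
  also have "\<dots> = (\<Sum>v\<in>words I. if v \<in> dual_code I C then int (card C) else 0)"
    by (rule sum.cong[OF refl sum_code_bit_sign_inner[OF C]])
  also have "\<dots> = int (card C * card (dual_code I C))"
    using fin by (simp add: sum.If_cases dual_code_def Int_def)
  finally show ?thesis
    by linarith
qed

lemma dual_code_dual_code:
  fixes C :: "('i \<Rightarrow> bit) set"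
  assumes C: "linear_code I C"
  shows "dual_code I (dual_code I C) = C"
proof -
  have I: "finite I" and CW: "C \<subseteq> words I"
    using linear_codeD(1,2)[OF C] .
  have dual: "linear_code I (dual_code I C)"
    using linear_code_dual_code[OF I] .
  have "C \<subseteq> dual_code I (dual_code I C)"
    using CW by (auto simp: dual_code_def mult.commute)
  moreover have "card (dual_code I (dual_code I C)) = card C"
  proof -
    have "card (dual_code I C) > 0"
      using linear_code_zero[OF dual] finite_linear_code_bit[OF dual] by (auto simp: card_gt_0_iff)
    then show ?thesis
      using card_mult_card_dual_code[OF C] card_mult_card_dual_code[OF dual]
      by (metis mult.commute mult_left_cancel neq0_conv)
  qed
  ultimately show ?thesis
    using finite_linear_code_bit[OF linear_code_dual_code[OF I]] by (metis card_subset_eq)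
qed

lemma hweight_le_card: "finite I \<Longrightarrow> hweight I v \<le> card I"
  unfolding hweight_def by (rule card_mono) auto

lemma hweight_eq_0_iff: "finite I \<Longrightarrow> v \<in> words I \<Longrightarrow> hweight I v = 0 \<longleftrightarrow> v = (\<lambda>_. 0)"
  unfolding hweight_def words_def by (auto simp: fun_eq_iff)

lemma sum_eq_of_nat_hweight:
  fixes v :: "'i \<Rightarrow> bit"
  assumes "finite I"
  shows "(\<Sum>i\<in>I. v i) = of_nat (hweight I v)"
proof -
  have "(\<Sum>i\<in>I. v i) = (\<Sum>i\<in>{i\<in>I. v i \<noteq> 0}. 1)"
    using assms by (intro sum.mono_neutral_cong_right) auto
  then show ?thesis by (simp add: hweight_def)
qed

lemma min_dist_eqI:
  assumes "finite I"
    and "\<And>v. v \<in> C \<Longrightarrow> v \<noteq> (\<lambda>_. 0) \<Longrightarrow> d \<le> hweight I v"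
    and "v \<in> C" "v \<noteq> (\<lambda>_. 0)" "hweight I v = d"
  shows "min_dist I C = d"
  unfolding min_dist_def
proof (rule Min_eqI)
  show "finite {hweight I v |v. v \<in> C \<and> v \<noteq> (\<lambda>_. 0)}"
    by (rule finite_subset[of _ "{..card I}"]) (auto simp: hweight_le_card[OF assms(1)])
qed (use assms in auto)

section \<open>Locality and the dual code\<close>

lemma repair_set_dual_support:
  fixes C :: "('i \<Rightarrow> 'f::field) set"
  assumes I: "finite I" and u: "u \<in> dual_code I C" and i: "i \<in> I" "u i \<noteq> 0"
  shows "repair_set I C i ({j\<in>I. u j \<noteq> 0} - {i})"
  unfolding repair_set_def
proof (intro conjI exI ballI)
  let ?R = "{j\<in>I. u j \<noteq> 0} - {i}"
  show "?R \<subseteq> I - {i}" by auto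
  fix c assume c: "c \<in> C"
  have "0 = (\<Sum>j\<in>I. u j * c j)"
    using u c by (simp add: dual_code_def)
  also have "\<dots> = (\<Sum>j\<in>insert i ?R. u j * c j)"
    using I i by (intro sum.mono_neutral_right) auto
  also have "\<dots> = u i * c i + (\<Sum>j\<in>?R. u j * c j)"
    using I by (subst sum.insert) auto
  also have "(\<Sum>j\<in>?R. u j * c j) = (\<Sum>j\<in>?R. u j * (if j \<in> ?R then c j else 0))"
    by (rule sum.cong) auto
  finally show "c i = - (\<Sum>j\<in>?R. u j * (if j \<in> ?R then c j else 0)) / u i"
    using i(2) by (simp add: field_simps add_eq_0_iff2)
qed

definition restrict_code :: "'i set \<Rightarrow> ('i \<Rightarrow> 'f::field) set \<Rightarrow> ('i \<Rightarrow> 'f) set" where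
  "restrict_code S C = (\<lambda>c j. if j \<in> S then c j else 0) ` C"

lemma linear_code_restrict_code:
  assumes C: "linear_code I C" and S: "S \<subseteq> I"
  shows "linear_code S (restrict_code S C)"
  unfolding linear_code_def
proof (intro conjI ballI allI)
  show "finite S"
    using linear_code_finite_index[OF C] S finite_subset by blast
  show "(\<lambda>_. 0) \<in> restrict_code S C"
    using linear_code_zero[OF C] by (force simp: restrict_code_def)
  fix u v assume "u \<in> restrict_code S C" "v \<in> restrict_code S C"
  then obtain cu cv where "cu \<in> C" "cv \<in> C"
    and "u = (\<lambda>j. if j \<in> S then cu j else 0)" "v = (\<lambda>j. if j \<in> S then cv j else 0)"
    by (auto simp: restrict_code_def)
  moreover have "(\<lambda>j. cu j + cv j) \<in> C"
    using linear_code_add[OF C \<open>cu \<in> C\<close> \<open>cv \<in> C\<close>] .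
  ultimately show "(\<lambda>j. u j + v j) \<in> restrict_code S C"
    unfolding restrict_code_def by (auto intro!: image_eqI[of _ _ "\<lambda>j. cu j + cv j"])
next
  fix a and v assume "v \<in> restrict_code S C"
  then obtain cv where "cv \<in> C" "v = (\<lambda>j. if j \<in> S then cv j else 0)"
    by (auto simp: restrict_code_def)
  moreover have "(\<lambda>j. a * cv j) \<in> C"
    using linear_code_smult[OF C \<open>cv \<in> C\<close>] .
  ultimately show "(\<lambda>j. a * v j) \<in> restrict_code S C"
    unfolding restrict_code_def by (auto intro!: image_eqI[of _ _ "\<lambda>j. a * cv j"])
qed (auto simp: restrict_code_def words_def)

lemma dual_code_restrict_code_subset:
  assumes I: "finite I" and S: "S \<subseteq> I"
  shows "dual_code S (restrict_code S C) \<subseteq> dual_code I C"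
proof
  fix v assume v: "v \<in> dual_code S (restrict_code S C)"
  then have vS: "v \<in> words S"
    by (simp add: dual_code_def)
  have "(\<Sum>j\<in>I. v j * c j) = 0" if "c \<in> C" for c
  proof -
    have "(\<Sum>j\<in>I. v j * c j) = (\<Sum>j\<in>S. v j * (if j \<in> S then c j else 0))"
      using I S vS by (intro sum.mono_neutral_cong_right) (auto simp: words_def)
    also have "\<dots> = 0"
      using v that by (auto simp: dual_code_def restrict_code_def)
    finally show ?thesis .
  qed
  with vS S show "v \<in> dual_code I C"
    by (auto simp: dual_code_def words_def)
qed

text \<open>A repair set for coordinate \<open>i\<close> forces a dual codeword through \<open>i\<close> supported in
  \<open>R \<union> {i}\<close>: otherwise the unit word at \<open>i\<close> is orthogonal to the dual of the code restricted
  to \<open>R \<union> {i}\<close>, hence is such a restriction, which contradicts that it vanishes on \<open>R\<close>.\<close>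

lemma dual_codeword_through_repair_set:
  fixes C :: "('i \<Rightarrow> bit) set"
  assumes C: "linear_code I C" and i: "i \<in> I" and R: "repair_set I C i R"
  shows "\<exists>u\<in>dual_code I C. u i = 1 \<and> (\<forall>j. u j \<noteq> 0 \<longrightarrow> j \<in> insert i R)"
proof (rule ccontr)
  assume no_dual: "\<not> ?thesis"
  have I: "finite I" and C0: "(\<lambda>_. 0) \<in> C"
    using linear_codeD(1,3)[OF C] .
  have RI: "R \<subseteq> I - {i}"
    using R by (simp add: repair_set_def)
  obtain f where f: "\<And>c. c \<in> C \<Longrightarrow> c i = f (\<lambda>j. if j \<in> R then c j else 0)"
    using R by (auto simp: repair_set_def)
  define S where "S = insert i R"
  have SI: "S \<subseteq> I" and fS: "finite S"
    using RI i I finite_subset by (auto simp: S_def)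
  have P: "linear_code S (restrict_code S C)"
    using linear_code_restrict_code[OF C SI] .
  have "unit_word i \<in> dual_code S (dual_code S (restrict_code S C))"
  proof -
    have "v i = 0" if v: "v \<in> dual_code S (restrict_code S C)" for v
    proof -
      have "v \<in> dual_code I C"
        using dual_code_restrict_code_subset[OF I SI] v by blast
      moreover have "v j \<noteq> 0 \<Longrightarrow> j \<in> insert i R" for j
        using v by (auto simp: dual_code_def words_def S_def)
      ultimately show "v i = 0"
        using no_dual by auto
    qed
    then show ?thesis
      using fS by (auto simp: dual_code_def unit_word_in_words S_def sum_unit_word_mult)
  qed
  then have "unit_word i \<in> restrict_code S C"
    by (simp add: dual_code_dual_code[OF P])
  then obtain e where e: "e \<in> C" "unit_word i = (\<lambda>j. if j \<in> S then e j else 0)"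
    by (auto simp: restrict_code_def)
  then have "e i = 1" and "(\<lambda>j. if j \<in> R then e j else 0) = (\<lambda>_. 0)"
    using RI by (auto simp: fun_eq_iff unit_word_def S_def split: if_splits)
  with f[OF e(1)] f[OF C0] show False
    by simp
qed

lemma locality_eq_dual_weight:
  fixes C :: "('i \<Rightarrow> bit) set"
  assumes C: "linear_code I C" and "I \<noteq> {}"
    and dual_weight: "\<And>u. u \<in> dual_code I C \<Longrightarrow> u \<noteq> (\<lambda>_. 0) \<Longrightarrow> d \<le> hweight I u"
    and cover: "\<And>i. i \<in> I \<Longrightarrow> \<exists>u\<in>dual_code I C. u i = 1 \<and> hweight I u = d"
  shows "locality I C = d - 1"
  unfolding locality_def
proof (rule Least_equality)
  have I: "finite I"
    using linear_code_finite_index[OF C] .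
  show "\<forall>i\<in>I. \<exists>R. repair_set I C i R \<and> card R = d - 1"
  proof
    fix i assume i: "i \<in> I"
    then obtain u where u: "u \<in> dual_code I C" "u i = 1" "hweight I u = d"
      using cover by blast
    have "card ({j\<in>I. u j \<noteq> 0} - {i}) = d - 1"
      using u i I by (simp add: hweight_def)
    then show "\<exists>R. repair_set I C i R \<and> card R = d - 1"
      using repair_set_dual_support[OF I u(1) i] u(2) by auto
  qed
next
  fix y assume "\<forall>i\<in>I. \<exists>R. repair_set I C i R \<and> card R = y"
  moreover obtain i where i: "i \<in> I"
    using \<open>I \<noteq> {}\<close> by blast
  ultimately obtain R where R: "repair_set I C i R" "card R = y"
    by blast
  have I: "finite I"
    using linear_code_finite_index[OF C] .
  then have fR: "finite R"
    using R(1) finite_subset by (auto simp: repair_set_def)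
  obtain u where u: "u \<in> dual_code I C" "u i = 1" "\<And>j. u j \<noteq> 0 \<Longrightarrow> j \<in> insert i R"
    using dual_codeword_through_repair_set[OF C i R(1)] by blast
  have "d \<le> hweight I u"
    using dual_weight[OF u(1)] u(2) by (auto simp: fun_eq_iff)
  also have "\<dots> \<le> card (insert i R)"
    unfolding hweight_def using fR u(3) by (intro card_mono) auto
  also have "\<dots> \<le> Suc y"
    using fR R(2) by (simp add: card_insert_if)
  finally show "d - 1 \<le> y"
    by simp
qed

text \<open>A binary code containing the all-one word and separating the coordinates has a dual of
  minimum distance at least 4: dual words have even weight and cannot be supported on two
  coordinates.\<close>

lemma dual_code_weight_ge_4:
  fixes C :: "('i \<Rightarrow> bit) set"
  assumes I: "finite I" and ones: "(\<lambda>i. if i \<in> I then 1 else 0) \<in> C"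
    and separating: "\<And>p q. p \<in> I \<Longrightarrow> q \<in> I \<Longrightarrow> p \<noteq> q \<Longrightarrow> \<exists>c\<in>C. c p \<noteq> c q"
    and v: "v \<in> dual_code I C" "v \<noteq> (\<lambda>_. 0)"
  shows "4 \<le> hweight I v"
proof -
  have orth: "(\<Sum>i\<in>I. v i * c i) = 0" if "c \<in> C" for c
    using v(1) that by (simp add: dual_code_def)
  have "of_nat (hweight I v) = (\<Sum>i\<in>I. v i * (if i \<in> I then 1 else 0))"
    unfolding sum_eq_of_nat_hweight[OF I, symmetric] by (rule sum.cong) simp_all
  then have "even (hweight I v)"
    using orth[OF ones] by (simp add: of_nat_bit split: if_splits)
  moreover have "hweight I v \<noteq> 0"
    using v by (simp add: hweight_eq_0_iff[OF I] dual_code_def)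
  moreover have "hweight I v \<noteq> 2"
  proof
    assume "hweight I v = 2"
    then obtain p q where pq: "{i\<in>I. v i \<noteq> 0} = {p, q}" "p \<noteq> q"
      unfolding hweight_def card_2_iff by blast
    then have "p \<in> {i\<in>I. v i \<noteq> 0}" "q \<in> {i\<in>I. v i \<noteq> 0}"
      by blast+
    then have p: "p \<in> I" "v p = 1" and q: "q \<in> I" "v q = 1"
      by simp_all
    then obtain c where c: "c \<in> C" "c p \<noteq> c q"
      using separating pq(2) by blast
    have "v i = 0" if "i \<in> I" "i \<notin> {p, q}" for i
      using that pq(1) by blast
    then have "(\<Sum>i\<in>I. v i * c i) = (\<Sum>i\<in>{p, q}. v i * c i)"
      using p q by (intro sum.mono_neutral_right I) auto
    also have "\<dots> = c p + c q"
      using pq(2) p q by simp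
    finally show False
      using orth[OF c(1)] c(2) by simp
  qed
  ultimately show ?thesis
    by (auto elim!: evenE)
qed

section \<open>Bounds on binary codes of minimum distance 4\<close>

lemma sphere_packing_bound:
  fixes C :: "('i \<Rightarrow> bit) set"
  assumes C: "linear_code I C" and dist: "\<And>v. v \<in> C \<Longrightarrow> v \<noteq> (\<lambda>_. 0) \<Longrightarrow> 3 \<le> hweight I v"
  shows "card C * (card I + 1) \<le> 2 ^ card I"
proof -
  have I: "finite I" and CW: "C \<subseteq> words I"
    using linear_codeD(1,2)[OF C] .
  define ball where "ball c = insert c ((\<lambda>i j. c j + unit_word i j) ` I)" for c :: "'i \<Rightarrow> bit"
  have card_ball: "card (ball c) = card I + 1" for c
  proof -
    have "inj_on (\<lambda>i j. c j + unit_word i j) I"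
    proof (rule inj_onI)
      fix i i' assume "(\<lambda>j. c j + unit_word i j) = (\<lambda>j. c j + unit_word i' j)"
      then have "unit_word i i = (unit_word i' i :: bit)"
        by (metis add_left_cancel)
      then show "i = i'"
        by (simp add: unit_word_def split: if_splits)
    qed
    moreover have "c \<notin> (\<lambda>i j. c j + unit_word i j) ` I"
    proof
      assume "c \<in> (\<lambda>i j. c j + unit_word i j) ` I"
      then obtain i where "c = (\<lambda>j. c j + unit_word i j)"
        by blast
      then have "c i = c i + unit_word i i"
        by metis
      then show False
        by (simp add: unit_word_def)
    qed
    ultimately show ?thesis
      using I by (simp add: ball_def card_image)
  qed
  have near: "\<exists>i. \<forall>j. x j \<noteq> c j \<longrightarrow> j = i" if "x \<in> ball c" for x c
    using that by (auto simp: ball_def unit_word_def)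
  have disjoint: "ball c \<inter> ball c' = {}" if "c \<in> C" "c' \<in> C" "c \<noteq> c'" for c c'
  proof (rule ccontr)
    assume "ball c \<inter> ball c' \<noteq> {}"
    then obtain x where x: "x \<in> ball c" "x \<in> ball c'"
      by blast
    obtain i where i: "\<And>j. x j \<noteq> c j \<Longrightarrow> j = i"
      using near[OF x(1)] by blast
    obtain i' where i': "\<And>j. x j \<noteq> c' j \<Longrightarrow> j = i'"
      using near[OF x(2)] by blast
    let ?d = "\<lambda>j. c j + c' j"
    have "?d \<in> C" "?d \<noteq> (\<lambda>_. 0)"
      using linear_code_add[OF C that(1,2)] that(3) by (auto simp: fun_eq_iff)
    then have "3 \<le> hweight I ?d"
      by (rule dist)
    moreover have "{j\<in>I. ?d j \<noteq> 0} \<subseteq> {i, i'}"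
    proof
      fix j assume "j \<in> {j\<in>I. ?d j \<noteq> 0}"
      then have "c j \<noteq> c' j"
        by auto
      then show "j \<in> {i, i'}"
        using i[of j] i'[of j] by (cases "x j = c j") auto
    qed
    then have "hweight I ?d \<le> card {i, i'}"
      unfolding hweight_def by (intro card_mono) auto
    ultimately show False
      by (simp add: card_insert_if split: if_splits)
  qed
  have "card C * (card I + 1) = (\<Sum>c\<in>C. card (ball c))"
    by (simp add: card_ball)
  also have "\<dots> = card (\<Union>(ball ` C))"
    using finite_linear_code_bit[OF C] disjoint I
    by (intro card_UN_disjoint[symmetric]) (auto simp: ball_def)
  also have "\<dots> \<le> card (words I :: ('i \<Rightarrow> bit) set)"
    using CW by (intro card_mono finite_words_bit I) (auto simp: ball_def words_def unit_word_def)
  finally show ?thesis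
    by (simp add: card_words_bit[OF I])
qed

lemma card_dual_code_of_generators:
  fixes g :: "nat \<Rightarrow> 'i \<Rightarrow> bit"
  assumes I: "finite I" and g: "\<And>k. k < t \<Longrightarrow> g k \<in> words I"
  shows "\<exists>k. card (dual_code I (g ` {..<t})) = 2 ^ k \<and> card I \<le> k + t"
proof -
  define span where "span = (\<lambda>a i. \<Sum>k<t. a k * g k i) ` words {..<t}"
  have span: "linear_code I span"
    unfolding linear_code_def
  proof (intro conjI ballI allI)
    show "span \<subseteq> words I"
      using g by (auto simp: span_def words_def)
    show "(\<lambda>_. 0) \<in> span"
      unfolding span_def by (rule image_eqI[of _ _ "\<lambda>_. 0"]) (auto simp: words_def)
    fix u v assume "u \<in> span" "v \<in> span"
    then obtain a b where "a \<in> words {..<t}" "b \<in> words {..<t}"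
      and "u = (\<lambda>i. \<Sum>k<t. a k * g k i)" "v = (\<lambda>i. \<Sum>k<t. b k * g k i)"
      by (auto simp: span_def)
    then show "(\<lambda>i. u i + v i) \<in> span"
      unfolding span_def
      by (intro image_eqI[of _ _ "\<lambda>k. a k + b k"]) (auto simp: words_def distrib_right sum.distrib)
  next
    fix c :: bit and v assume "v \<in> span"
    then obtain a where "a \<in> words {..<t}" "v = (\<lambda>i. \<Sum>k<t. a k * g k i)"
      by (auto simp: span_def)
    then show "(\<lambda>i. c * v i) \<in> span"
      unfolding span_def
      by (intro image_eqI[of _ _ "\<lambda>k. c * a k"]) (auto simp: words_def sum_distrib_left mult.assoc)
  qed (fact I)
  have dual_span: "dual_code I span = dual_code I (g ` {..<t})"
  proof
    have "g k \<in> span" if "k < t" for k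
      unfolding span_def
      by (rule image_eqI[of _ _ "unit_word k"])
         (use that in \<open>simp_all add: unit_word_in_words sum_unit_word_mult\<close>)
    then show "dual_code I span \<subseteq> dual_code I (g ` {..<t})"
      by (auto simp: dual_code_def)
  next
    have "(\<Sum>i\<in>I. v i * (\<Sum>k<t. a k * g k i)) = 0" if "v \<in> dual_code I (g ` {..<t})" for v a
    proof -
      have "(\<Sum>i\<in>I. v i * (\<Sum>k<t. a k * g k i)) = (\<Sum>i\<in>I. \<Sum>k<t. a k * (v i * g k i))"
        by (simp add: sum_distrib_left mult_ac)
      also have "\<dots> = (\<Sum>k<t. \<Sum>i\<in>I. a k * (v i * g k i))"
        by (rule sum.swap)
      also have "\<dots> = (\<Sum>k<t. a k * (\<Sum>i\<in>I. v i * g k i))"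
        by (simp add: sum_distrib_left)
      also have "\<dots> = 0"
        using that by (simp add: dual_code_def)
      finally show ?thesis .
    qed
    then show "dual_code I (g ` {..<t}) \<subseteq> dual_code I span"
      by (auto simp: dual_code_def span_def)
  qed
  have card_span: "card span \<le> 2 ^ t"
    using card_image_le[OF finite_words_bit, of "{..<t}"] card_words_bit[of "{..<t}"]
    by (simp add: span_def)
  have product: "card span * card (dual_code I (g ` {..<t})) = 2 ^ card I"
    using card_mult_card_dual_code[OF span] by (simp add: dual_span)
  then have "card (dual_code I (g ` {..<t})) dvd 2 ^ card I"
    unfolding product[symmetric] by simp
  then obtain k where k: "card (dual_code I (g ` {..<t})) = 2 ^ k"
    using divides_primepow_nat[OF two_is_prime_nat] by blast
  have "(2::nat) ^ card I \<le> 2 ^ t * 2 ^ k"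
    unfolding product[symmetric] k[symmetric] using card_span by (rule mult_le_mono1)
  then have "card I \<le> k + t"
    by (simp add: power_add[symmetric] add.commute)
  with k show ?thesis
    by blast
qed

lemma exists_bit_differs:
  fixes p q :: nat
  assumes "p < 2 ^ j" "q < 2 ^ j" "p \<noteq> q"
  shows "\<exists>k<j. bit p k \<noteq> bit q k"
proof (rule ccontr)
  assume "\<not> ?thesis"
  then have "take_bit j p = take_bit j q"
    by (intro bit_eqI) (auto simp: bit_take_bit_iff)
  with assms show False
    by (metis take_bit_nat_eq_self_iff)
qed

text \<open>The extended Hamming code of length \<open>2^j\<close> is the dual of the all-one word together with
  the \<open>j\<close> words recording the binary digits of the coordinates.\<close>

lemma extended_hamming_code:
  "\<exists>(C :: (nat \<Rightarrow> bit) set) k. linear_code {0..<2^j} C \<and> card C = 2 ^ k \<and> 2 ^ j \<le> k + j + 1 \<and>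
     (\<forall>v\<in>C. v \<noteq> (\<lambda>_. 0) \<longrightarrow> 4 \<le> hweight {0..<2^j} v)"
proof -
  let ?I = "{0..<2^j} :: nat set"
  define g :: "nat \<Rightarrow> nat \<Rightarrow> bit" where
    "g k = (case k of 0 \<Rightarrow> (\<lambda>i. if i \<in> ?I then 1 else 0)
                    | Suc l \<Rightarrow> (\<lambda>i. if i \<in> ?I \<and> bit i l then 1 else 0))" for k
  define C where "C = dual_code ?I (g ` {..<j + 1})"
  have "g k \<in> words ?I" for k
    by (simp add: g_def words_def split: nat.split)
  then obtain k where k: "card C = 2 ^ k" "2 ^ j \<le> k + (j + 1)"
    using card_dual_code_of_generators[of ?I "j + 1" g] by (auto simp: C_def)
  have "4 \<le> hweight ?I v" if "v \<in> C" "v \<noteq> (\<lambda>_. 0)" for v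
  proof (rule dual_code_weight_ge_4[where C = "g ` {..<j + 1}"])
    show "(\<lambda>i. if i \<in> ?I then 1 else 0) \<in> g ` {..<j + 1}"
      by (rule image_eqI[of _ _ 0]) (simp_all add: g_def)
    fix p q assume "p \<in> ?I" "q \<in> ?I" "p \<noteq> q"
    then obtain l where "l < j" "bit p l \<noteq> bit q l"
      using exists_bit_differs[of p j q] by auto
    with \<open>p \<in> ?I\<close> \<open>q \<in> ?I\<close> have "g (Suc l) p \<noteq> g (Suc l) q"
      by (simp add: g_def)
    moreover have "g (Suc l) \<in> g ` {..<j + 1}"
      using \<open>l < j\<close> by simp
    ultimately show "\<exists>c\<in>g ` {..<j + 1}. c p \<noteq> c q"
      by blast
  qed (use that in \<open>simp_all add: C_def\<close>)
  moreover have "linear_code ?I C"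
    by (simp add: C_def linear_code_dual_code)
  ultimately show ?thesis
    using k by auto
qed

lemma finite_code_dimensions:
  "finite {k. \<exists>C :: (nat \<Rightarrow> bit) set. linear_code {0..<n} C \<and> card C = card (UNIV :: bit set) ^ k \<and> P C}"
proof (rule finite_subset[of _ "{..n}"])
  show "{k. \<exists>C :: (nat \<Rightarrow> bit) set. linear_code {0..<n} C \<and> card C = card (UNIV :: bit set) ^ k \<and> P C}
    \<subseteq> {..n}"
  proof
    fix k assume "k \<in> {k. \<exists>C :: (nat \<Rightarrow> bit) set. linear_code {0..<n} C \<and>
      card C = card (UNIV :: bit set) ^ k \<and> P C}"
    then obtain C :: "(nat \<Rightarrow> bit) set"
      where C: "linear_code {0..<n} C" "card C = card (UNIV :: bit set) ^ k"
      by blast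
    have "card C \<le> card (words {0..<n} :: (nat \<Rightarrow> bit) set)"
      by (rule card_mono[OF finite_words_bit linear_code_subset_words[OF C(1)]]) simp
    then have "(2::nat) ^ k \<le> 2 ^ n"
      by (simp add: C(2) card_words_bit card_UNIV_bit)
    then show "k \<in> {..n}"
      by simp
  qed
qed simp

definition code_dimensions :: "nat \<Rightarrow> nat \<Rightarrow> nat set" where
  "code_dimensions n d = {k. \<exists>C :: (nat \<Rightarrow> bit) set. linear_code {0..<n} C \<and>
     card C = card (UNIV :: bit set) ^ k \<and> (\<forall>v\<in>C. v \<noteq> (\<lambda>_. 0) \<longrightarrow> d \<le> hweight {0..<n} v)}"

lemma k_opt_bit_eq_Max: "k_opt TYPE(bit) n d = Max (code_dimensions n d)"
  by (simp add: k_opt_def code_dimensions_def)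

lemma finite_code_dimensions_bit: "finite (code_dimensions n d)"
  unfolding code_dimensions_def by (rule finite_code_dimensions)

lemma k_opt_bit_ge:
  fixes C :: "(nat \<Rightarrow> bit) set"
  assumes "linear_code {0..<n} C" "card C = 2 ^ k"
    and "\<forall>v\<in>C. v \<noteq> (\<lambda>_. 0) \<longrightarrow> d \<le> hweight {0..<n} v"
  shows "k \<le> k_opt TYPE(bit) n d"
proof -
  have "k \<in> code_dimensions n d"
    unfolding code_dimensions_def by (intro CollectI exI[of _ C]) (simp add: assms card_UNIV_bit)
  then show ?thesis
    unfolding k_opt_bit_eq_Max by (rule Max_ge[OF finite_code_dimensions_bit])
qed

lemma k_opt_bit_attained:
  "\<exists>C :: (nat \<Rightarrow> bit) set. linear_code {0..<n} C \<and> card C = 2 ^ k_opt TYPE(bit) n d \<and>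
     (\<forall>v\<in>C. v \<noteq> (\<lambda>_. 0) \<longrightarrow> d \<le> hweight {0..<n} v)"
proof -
  have "linear_code {0..<n} {\<lambda>_. 0 :: bit}"
    by (simp add: linear_code_def words_def)
  then have "0 \<in> code_dimensions n d"
    unfolding code_dimensions_def by (intro CollectI exI[of _ "{\<lambda>_. 0}"]) simp
  then have "k_opt TYPE(bit) n d \<in> code_dimensions n d"
    unfolding k_opt_bit_eq_Max using Max_in[OF finite_code_dimensions_bit] by blast
  then show ?thesis
    by (simp add: code_dimensions_def card_UNIV_bit)
qed

theorem k_opt_bit_distance_4_power_of_two: "k_opt TYPE(bit) (2 ^ j) 4 = 2 ^ j - j - 1"
proof -
  obtain C :: "(nat \<Rightarrow> bit) set"
    where C: "linear_code {0..<2^j} C" "card C = 2 ^ k_opt TYPE(bit) (2 ^ j) 4"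
    and dist: "\<forall>v\<in>C. v \<noteq> (\<lambda>_. 0) \<longrightarrow> 4 \<le> hweight {0..<2^j} v"
    using k_opt_bit_attained by blast
  have "(2::nat) ^ (k_opt TYPE(bit) (2 ^ j) 4 + j) < 2 ^ k_opt TYPE(bit) (2 ^ j) 4 * (2 ^ j + 1)"
    by (simp add: power_add)
  also have "\<dots> \<le> 2 ^ 2 ^ j"
    using sphere_packing_bound[OF C(1)] dist C(2) by fastforce
  finally have upper: "k_opt TYPE(bit) (2 ^ j) 4 + j < 2 ^ j"
    using power_less_imp_less_exp by fastforce
  obtain H :: "(nat \<Rightarrow> bit) set" and k where "linear_code {0..<2^j} H" "card H = 2 ^ k" "2 ^ j \<le> k + j + 1"
    and "\<forall>v\<in>H. v \<noteq> (\<lambda>_. 0) \<longrightarrow> 4 \<le> hweight {0..<2^j} v"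
    using extended_hamming_code by blast
  then have "2 ^ j \<le> k_opt TYPE(bit) (2 ^ j) 4 + j + 1"
    using k_opt_bit_ge[of "2 ^ j" H k 4] by linarith
  with upper show ?thesis
    by linarith
qed

text \<open>With \<open>s = 2^i\<close>, the Cadambe--Mazumdar bound for length \<open>s (2s - 1)\<close>, distance 4 and
  locality \<open>s (s - 1) - 1\<close> is attained at \<open>t = 1\<close>, where the residual length is \<open>s^2 = 2^(2i)\<close>.\<close>

theorem CM_bound_bit_distance_4:
  assumes i: "2 \<le> i"
  shows "CM_bound TYPE(bit) (2^i * (2^(i+1) - 1)) 4 (2^i * (2^i - 1) - 1) = 2^i * (2^(i+1) - 1) - 2*i - 2"
proof -
  define s :: nat where "s = 2 ^ i"
  define n where "n = s * (2 * s - 1)"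
  define L where "L = s * (s - 1) - 1"
  define f where "f t = L * t + k_opt TYPE(bit) (n - t * (L + 1)) 4" for t
  have "2 ^ 2 \<le> s"
    unfolding s_def using i by (intro power_increasing) auto
  then have s4: "4 \<le> s" and ss: "4 * s \<le> s * s"
    by simp_all
  have "i < s"
    unfolding s_def by (rule less_exp)
  have "s * (s - 1) = s * s - s"
    by (simp add: diff_mult_distrib2)
  then have L: "L + 1 + s = s * s"
    using ss s4 unfolding L_def by linarith
  have n: "n + s = 2 * (s * s)"
    using s4 by (simp add: n_def right_diff_distrib')
  have sq: "s * s = 2 ^ (2 * i)"
    by (simp add: s_def flip: power_add mult_2)
  have "n - (L + 1) = s * s"
    using n L ss by linarith
  then have "f 1 = L + (s * s - 2 * i - 1)"
    unfolding f_def by (simp add: sq k_opt_bit_distance_4_power_of_two)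
  then have f1: "f 1 = n - 2 * i - 2"
    using n L ss \<open>i < s\<close> by linarith
  have "n - 2 * (L + 1) = s"
    using n L unfolding distrib_left by linarith
  then have "f 2 = L * 2 + (s - i - 1)"
    unfolding f_def by (simp add: s_def k_opt_bit_distance_4_power_of_two)
  then have f2: "f 1 \<le> f 2"
    using f1 n L ss \<open>i < s\<close> i by linarith
  have f3: "f 1 \<le> f t" if "3 \<le> t" for t
  proof -
    have "f 1 \<le> L * 3"
      using f1 n L ss s4 by linarith
    also have "\<dots> \<le> L * t"
      using that by simp
    also have "\<dots> \<le> f t"
      by (simp add: f_def)
    finally show ?thesis .
  qed
  have "CM_bound TYPE(bit) n 4 L = Inf (f ` {t. t \<ge> 1})"
    by (simp add: CM_bound_def f_def)
  also have "\<dots> = f 1"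
  proof (rule cInf_eq_minimum)
    fix y assume "y \<in> f ` {t. t \<ge> 1}"
    then obtain t where "1 \<le> t" "y = f t"
      by blast
    then consider "t = 1" | "t = 2" | "3 \<le> t"
      by linarith
    then show "f 1 \<le> y"
      by cases (use \<open>y = f t\<close> f2 f3 in auto)
  qed simp
  finally show ?thesis
    using f1 by (simp add: n_def L_def s_def power_add[symmetric])
qed

section \<open>Finite fields of characteristic two\<close>

lemma of_nat_card_UNIV_eq_0:
  assumes "finite (UNIV :: 'a::ring_1 set)"
  shows "of_nat (card (UNIV :: 'a set)) = (0 :: 'a)"
proof -
  have "(\<Sum>x\<in>UNIV. x + 1) = (\<Sum>x\<in>(UNIV :: 'a set). x)"
    by (rule sum.reindex_bij_witness[of _ "\<lambda>x. x - 1" "\<lambda>x. x + 1"]) auto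
  then show ?thesis
    by (simp add: sum.distrib)
qed

lemma CHAR_eq_2_if_card_UNIV:
  assumes "card (UNIV :: 'a::field set) = 2 ^ m"
  shows "CHAR('a) = 2"
proof -
  have "finite (UNIV :: 'a set)"
    using assms by (metis card.infinite power_not_zero zero_neq_numeral)
  then have "prime CHAR('a)" and "of_nat (2 ^ m) = (0 :: 'a)"
    using prime_CHAR_semidom finite_imp_CHAR_pos of_nat_card_UNIV_eq_0 assms by metis+
  then have "CHAR('a) dvd 2"
    by (metis of_nat_eq_0_iff_char_dvd prime_dvd_power)
  with \<open>prime CHAR('a)\<close> show ?thesis
    by (simp add: primes_dvd_imp_eq)
qed

lemma power_card_UNIV_eq_self:
  assumes fin: "finite (UNIV :: 'a::field set)"
  shows "(x :: 'a) ^ card (UNIV :: 'a set) = x"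
proof (cases "x = 0")
  case True
  then show ?thesis
    by (simp only: zero_power[OF finite_UNIV_card_ge_0[OF fin]])
next
  case False
  define U where "U = UNIV - {0 :: 'a}"
  define n where "n = card U"
  have "(\<Prod>y\<in>U. x * y) = (\<Prod>y\<in>U. y)"
    unfolding U_def
    by (rule prod.reindex_bij_witness[of _ "\<lambda>y. y / x" "\<lambda>y. x * y"]) (use False in auto)
  then have "x ^ n * (\<Prod>y\<in>U. y) = 1 * (\<Prod>y\<in>U. y)"
    by (simp add: prod.distrib n_def)
  moreover have "(\<Prod>y\<in>U. y) \<noteq> 0"
    using fin by (simp add: U_def)
  ultimately have "x ^ n = 1"
    by (rule mult_right_cancel[THEN iffD1, rotated])
  moreover have "card (UNIV :: 'a set) = Suc n"
    using card_Suc_Diff1[OF fin, of 0] by (simp add: n_def U_def)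
  ultimately show ?thesis
    by simp
qed

lemma add_self_CHAR_2: "CHAR('a::ring_1) = 2 \<Longrightarrow> (x :: 'a) + x = 0"
  by (metis mult_2 mult_zero_left of_nat_CHAR of_nat_numeral)

lemma add_eq_0_iff_CHAR_2: "CHAR('a::ring_1) = 2 \<Longrightarrow> (x :: 'a) + y = 0 \<longleftrightarrow> x = y"
  by (metis add_self_CHAR_2 add_left_cancel add_right_imp_eq)

lemma power_two_power_add_CHAR_2:
  "CHAR('a::comm_ring_1) = 2 \<Longrightarrow> ((x :: 'a) + y) ^ 2 ^ i = x ^ 2 ^ i + y ^ 2 ^ i"
  by (rule freshmans_dream') simp_all

lemma sum_power_two_power_CHAR_2:
  "CHAR('a::comm_ring_1) = 2 \<Longrightarrow> sum f A ^ 2 ^ i = (\<Sum>a\<in>A. (f a :: 'a) ^ 2 ^ i)"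
  by (rule freshmans_dream_sum') simp_all

lemma card_power_eq_poly_le:
  fixes q :: "'a::field poly"
  assumes "0 < n" "degree q < n"
  shows "finite {x. x ^ n = poly q x}" "card {x. x ^ n = poly q x} \<le> n"
proof -
  define p where "p = monom 1 n - q"
  have "coeff p n = 1"
    using assms(2) by (simp add: p_def coeff_monom coeff_eq_0)
  then have "p \<noteq> 0"
    by auto
  moreover have "degree p \<le> n"
    unfolding p_def using assms(2) by (intro degree_diff_le degree_monom_le) simp
  moreover have "{x. x ^ n = poly q x} = {x. poly p x = 0}"
    by (simp add: p_def poly_monom)
  ultimately show "finite {x. x ^ n = poly q x}" "card {x. x ^ n = poly q x} \<le> n"
    using poly_roots_finite card_poly_roots_bound le_trans by metis+
qed

lemma trace2_zero [simp]: "trace2 k 0 = 0"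
  by (simp add: trace2_def power_0_left)

lemma trace2_Suc: "trace2 (Suc k) y = trace2 k y + y ^ 2 ^ k"
  by (simp add: trace2_def)

lemma trace2_add_length: "trace2 (a + b) z = trace2 a z + trace2 b (z ^ 2 ^ a)"
proof (induction b)
  case (Suc b)
  have "(z ^ 2 ^ a) ^ 2 ^ b = z ^ 2 ^ (a + b)"
    by (simp add: power_add power_mult[symmetric])
  with Suc show ?case
    by (simp add: trace2_Suc add.assoc)
qed (simp add: trace2_def)

lemma trace2_add: "CHAR('a::field) = 2 \<Longrightarrow> trace2 k ((x :: 'a) + y) = trace2 k x + trace2 k y"
  by (simp add: trace2_def power_two_power_add_CHAR_2 sum.distrib)

lemma trace2_power_two:
  assumes "CHAR('a::field) = 2"
  shows "trace2 k (y :: 'a) ^ 2 = trace2 k (y ^ 2)"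
proof -
  have "trace2 k y ^ 2 = (\<Sum>i<k. (y ^ 2 ^ i) ^ 2)"
    using sum_power_two_power_CHAR_2[OF assms, of "\<lambda>i. y ^ 2 ^ i" "{..<k}" 1]
    by (simp add: trace2_def)
  then show ?thesis
    by (simp add: trace2_def flip: power_mult) (simp add: mult.commute)
qed

lemma trace2_in_prime_field:
  assumes "CHAR('a::field) = 2" and y: "(y :: 'a) ^ 2 ^ k = y"
  shows "trace2 k y = 0 \<or> trace2 k y = 1"
proof -
  have "trace2 (1 + k) y = trace2 (k + 1) y"
    by (simp add: add.commute)
  then have "y + trace2 k (y ^ 2) = trace2 k y + y"
    unfolding trace2_add_length using y by (simp add: trace2_def)
  then have "trace2 k y ^ 2 = trace2 k y"
    by (simp add: trace2_power_two[OF assms(1)] add.commute)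
  then show ?thesis
    by (metis power2_eq_square mult_cancel_right1 mult_zero_left)
qed

lemma card_trace2_eq_0_le:
  assumes "0 < k"
  shows "finite {y :: 'a::field. trace2 k y = 0}" "card {y :: 'a. trace2 k y = 0} \<le> 2 ^ (k - 1)"
proof -
  obtain l where k: "k = Suc l"
    using assms by (cases k) auto
  define q :: "'a poly" where "q = - (\<Sum>i<l. monom 1 (2 ^ i))"
  have deg: "degree q < 2 ^ l"
    unfolding q_def degree_minus
    by (rule degree_sum_less) (auto intro: le_less_trans[OF degree_monom_le])
  have sub: "{y :: 'a. trace2 k y = 0} \<subseteq> {y. y ^ 2 ^ l = poly q y}"
    by (auto simp: k trace2_Suc q_def poly_sum poly_monom trace2_def eq_neg_iff_add_eq_0 add.commute)
  have fin: "finite {y. y ^ 2 ^ l = poly q y}"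
    using card_power_eq_poly_le(1)[OF _ deg] by simp
  show "finite {y :: 'a. trace2 k y = 0}"
    using finite_subset[OF sub fin] .
  have "card {y :: 'a. trace2 k y = 0} \<le> card {y. y ^ 2 ^ l = poly q y}"
    using card_mono[OF fin sub] .
  also have "\<dots> \<le> 2 ^ l"
    using card_power_eq_poly_le(2)[OF _ deg] by simp
  finally show "card {y :: 'a. trace2 k y = 0} \<le> 2 ^ (k - 1)"
    by (simp add: k)
qed

text \<open>The trace of \<open>GF(2^k)\<close> onto \<open>GF(2)\<close> is balanced: translation by an element of trace
  one exchanges its zeros and its ones.\<close>

lemma card_trace2_eq_0_in_subfield:
  assumes char: "CHAR('a::field) = 2" and "0 < k"
    and card: "card {y :: 'a. y ^ 2 ^ k = y} = 2 ^ k"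
  shows "2 * card {y :: 'a. y ^ 2 ^ k = y \<and> trace2 k y = 0} = 2 ^ k"
proof -
  define K where "K = {y :: 'a. y ^ 2 ^ k = y}"
  define Z where "Z = {y\<in>K. trace2 k y = 0}"
  have fin: "finite K"
    using card by (metis K_def card.infinite power_not_zero zero_neq_numeral)
  have closed: "y + z \<in> K" if "y \<in> K" "z \<in> K" for y z
    using that by (simp add: K_def power_two_power_add_CHAR_2[OF char])
  have trace_values: "trace2 k y = 0 \<or> trace2 k y = 1" if "y \<in> K" for y
    using trace2_in_prime_field[OF char] that by (simp add: K_def)
  have "card Z \<le> card {y :: 'a. trace2 k y = 0}"
    unfolding Z_def by (rule card_mono[OF card_trace2_eq_0_le(1)[OF \<open>0 < k\<close>]]) blast
  also have "\<dots> \<le> 2 ^ (k - 1)"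
    by (rule card_trace2_eq_0_le(2)[OF \<open>0 < k\<close>])
  also have "\<dots> < card K"
    using \<open>0 < k\<close> by (simp add: K_def card)
  finally have "Z \<noteq> K"
    by auto
  then obtain y0 where y0: "y0 \<in> K" "trace2 k y0 = 1"
    using trace_values by (auto simp: Z_def)
  have "bij_betw (\<lambda>y. y + y0) Z {y\<in>K. trace2 k y = 1}"
    by (rule bij_betw_byWitness[where f' = "\<lambda>y. y + y0"])
       (auto simp: Z_def closed y0 trace2_add[OF char] add.assoc add_self_CHAR_2[OF char] add_eq_0_iff_CHAR_2[OF char])
  then have "card Z = card {y\<in>K. trace2 k y = 1}"
    by (rule bij_betw_same_card)
  moreover have "card Z + card {y\<in>K. trace2 k y = 1} = card K"
    using trace_values fin by (subst card_Un_disjoint[symmetric]) (auto simp: Z_def intro: arg_cong[where f = card])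
  ultimately show ?thesis
    using card by (simp add: K_def Z_def)
qed

lemma card_common_zeros_of_binary_functions:
  fixes f g :: "'b \<Rightarrow> 'a::zero_neq_one"
  assumes "finite A" and "\<And>x. x \<in> A \<Longrightarrow> f x = 0 \<or> f x = 1" and "\<And>x. x \<in> A \<Longrightarrow> g x = 0 \<or> g x = 1"
  shows "2 * card {x\<in>A. f x = 0 \<and> g x = 0} + card A =
    card {x\<in>A. f x = 0} + card {x\<in>A. g x = 0} + card {x\<in>A. f x = g x}"
proof -
  have card_eq: "card {x\<in>A. P x} = (\<Sum>x\<in>A. of_bool (P x))" for P
    using assms(1) by (simp add: sum_of_bool_eq Int_def)
  have "2 * card {x\<in>A. f x = 0 \<and> g x = 0} + card A = (\<Sum>x\<in>A. 2 * of_bool (f x = 0 \<and> g x = 0) + 1)"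
    unfolding card_eq by (simp only: card_eq_sum sum.distrib sum_distrib_left)
  also have "\<dots> = (\<Sum>x\<in>A. of_bool (f x = 0) + of_bool (g x = 0) + of_bool (f x = g x))"
    using assms(2,3) by (intro sum.cong) force+
  also have "\<dots> = card {x\<in>A. f x = 0} + card {x\<in>A. g x = 0} + card {x\<in>A. f x = g x}"
    by (simp add: card_eq sum.distrib)
  finally show ?thesis .
qed

definition norm_trace :: "nat \<Rightarrow> 'a::field \<Rightarrow> 'a" where
  "norm_trace r x = trace2 r (x ^ (2 ^ r + 1))"

lemma defining_set_eq: "defining_set r = {x. norm_trace r x = 0}"
  by (simp add: defining_set_def norm_trace_def)

section \<open>The quadratic form \<open>Tr(x^(2^r+1))\<close> on \<open>GF(2^(2r))\<close>\<close>

context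
  fixes r m :: nat
  assumes card_UNIV: "card (UNIV :: 'a::field set) = 2 ^ m" and m: "m = 2 * r" and r: "0 < r"
begin

lemma CHAR_2: "CHAR('a) = 2"
  using CHAR_eq_2_if_card_UNIV[OF card_UNIV] .

lemma finite_UNIV_field: "finite (UNIV :: 'a set)"
  using card_UNIV by (metis card.infinite power_not_zero zero_neq_numeral)

lemma power_two_power_m: "(x :: 'a) ^ 2 ^ m = x"
  using power_card_UNIV_eq_self[OF finite_UNIV_field] by (simp add: card_UNIV)

lemma power_two_power_r_twice: "((x :: 'a) ^ 2 ^ r) ^ 2 ^ r = x"
  using power_two_power_m by (simp add: m mult_2 power_add flip: power_mult)

lemma norm_in_subfield: "((x :: 'a) ^ (2 ^ r + 1)) ^ 2 ^ r = x ^ (2 ^ r + 1)"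
  using power_two_power_r_twice[of x]
  by (simp add: power_add power_mult_distrib mult.commute flip: power_mult)

lemma trace2_m_in_prime_field: "trace2 m (x :: 'a) = 0 \<or> trace2 m x = 1"
  using trace2_in_prime_field[OF CHAR_2 power_two_power_m] .

lemma norm_trace_in_prime_field: "norm_trace r (x :: 'a) = 0 \<or> norm_trace r x = 1"
  unfolding norm_trace_def using trace2_in_prime_field[OF CHAR_2 norm_in_subfield] .

text \<open>Counting \<open>GF(2^m)\<^sup>*\<close> along the fibres of the norm \<open>x \<mapsto> x^(2^r+1)\<close>, each of size at most
  \<open>2^r + 1\<close>, over the at most \<open>2^r - 1\<close> nonzero elements of the subfield \<open>GF(2^r)\<close>, forces both
  bounds to be attained.\<close>

lemma card_subfield_and_norm_fibres:
  "card {y :: 'a. y ^ 2 ^ r = y} = 2 ^ r \<and>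
   (\<forall>y. y \<noteq> 0 \<and> y ^ 2 ^ r = y \<longrightarrow> card {x :: 'a. x ^ (2 ^ r + 1) = y} = 2 ^ r + 1)"
proof -
  define K where "K = {y :: 'a. y ^ 2 ^ r = y} - {0}"
  define fibre where "fibre y = {x :: 'a. x ^ (2 ^ r + 1) = y}" for y
  have fin: "finite (S :: 'a set)" for S
    using finite_subset[OF subset_UNIV finite_UNIV_field] .
  have "card {y :: 'a. y ^ 2 ^ r = poly [:0, 1:] y} \<le> 2 ^ r"
    using r one_less_power[of "2::nat" r] by (intro card_power_eq_poly_le(2)) auto
  then have card_K: "card K \<le> 2 ^ r - 1"
    by (simp add: K_def card_Diff_singleton fin)
  have card_fibre: "card (fibre y) \<le> 2 ^ r + 1" for y
    using card_power_eq_poly_le(2)[of "2 ^ r + 1" "[:y:]"] by (simp add: fibre_def)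
  have "UNIV - {0 :: 'a} = (\<Union>y\<in>K. fibre y)"
    using norm_in_subfield by (auto simp: K_def fibre_def)
  then have "2 ^ m - 1 = (\<Sum>y\<in>K. card (fibre y))"
    using card_Diff_singleton[of 0 "UNIV :: 'a set"]
    by (simp add: card_UNIV card_UN_disjoint fin fibre_def disjoint_iff)
  moreover have product: "(2::nat) ^ m - 1 = (2 ^ r - 1) * (2 ^ r + 1)"
  proof -
    obtain t where t: "(2::nat) ^ r = Suc t"
      using not0_implies_Suc[of "2 ^ r"] by auto
    have "(2::nat) ^ m = 2 ^ r * 2 ^ r"
      by (simp add: m mult_2 power_add)
    then show ?thesis
      by (simp add: t)
  qed
  moreover have "(\<Sum>y\<in>K. card (fibre y)) \<le> card K * (2 ^ r + 1)"
    using sum_bounded_above[of K "\<lambda>y. card (fibre y)" "2 ^ r + 1"] card_fibre by simp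
  ultimately have card_K_eq: "card K = 2 ^ r - 1"
    using card_K by (metis le_antisym mult_le_cancel2 add_gr_0 zero_less_one)
  with \<open>2 ^ m - 1 = (\<Sum>y\<in>K. card (fibre y))\<close> product
  have total: "(\<Sum>y\<in>K. card (fibre y)) = (\<Sum>y\<in>K. 2 ^ r + 1)"
    by simp
  have fibres: "card (fibre y) = 2 ^ r + 1" if "y \<in> K" for y
  proof (rule ccontr)
    assume "card (fibre y) \<noteq> 2 ^ r + 1"
    then have "(\<Sum>y\<in>K. card (fibre y)) < (\<Sum>y\<in>K. 2 ^ r + 1)"
      using card_fibre that fin by (intro sum_strict_mono_ex1) (auto simp: le_less)
    with total show False
      by simp
  qed
  have "card {y :: 'a. y ^ 2 ^ r = y} = Suc (card K)"
    unfolding K_def using r by (intro card_Suc_Diff1[symmetric] fin) simp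
  with card_K_eq have "card {y :: 'a. y ^ 2 ^ r = y} = 2 ^ r"
    by simp
  moreover have "card {x :: 'a. x ^ (2 ^ r + 1) = y} = 2 ^ r + 1" if "y \<noteq> 0" "y ^ 2 ^ r = y" for y
    using fibres[of y] that by (simp add: K_def fibre_def)
  ultimately show ?thesis
    by blast
qed

lemma card_subfield: "card {y :: 'a. y ^ 2 ^ r = y} = 2 ^ r"
  using card_subfield_and_norm_fibres by blast

lemma card_norm_fibre: "y \<noteq> 0 \<Longrightarrow> y ^ 2 ^ r = y \<Longrightarrow> card {x :: 'a. x ^ (2 ^ r + 1) = y} = 2 ^ r + 1"
  using card_subfield_and_norm_fibres by blast

lemma card_trace2_linear_form:
  assumes "(b :: 'a) \<noteq> 0"
  shows "2 * card {x. trace2 m (b * x) = 0} = 2 ^ m"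
proof -
  have "bij_betw (\<lambda>x. b * x) {x. trace2 m (b * x) = 0} {y. y ^ 2 ^ m = y \<and> trace2 m y = 0}"
    by (rule bij_betw_byWitness[where f' = "\<lambda>y. y / b"]) (auto simp: assms power_two_power_m)
  moreover have "2 * card {y :: 'a. y ^ 2 ^ m = y \<and> trace2 m y = 0} = 2 ^ m"
  proof (rule card_trace2_eq_0_in_subfield[OF CHAR_2])
    show "0 < m"
      using r m by simp
    show "card {y :: 'a. y ^ 2 ^ m = y} = 2 ^ m"
      using power_two_power_m card_UNIV by simp
  qed
  ultimately show ?thesis
    by (simp add: bij_betw_same_card)
qed

lemma trace2_nondegenerate:
  assumes "(u :: 'a) \<noteq> 0"
  shows "\<exists>b. trace2 m (b * u) \<noteq> 0"
proof (rule ccontr)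
  assume "\<not> ?thesis"
  then have "{x. trace2 m (u * x) = 0} = UNIV"
    by (auto simp: mult.commute)
  with card_trace2_linear_form[OF assms] card_UNIV show False
    by simp
qed

lemma norm_trace_add:
  "norm_trace r ((x :: 'a) + a) = norm_trace r x + norm_trace r a + trace2 m (x * a ^ 2 ^ r)"
proof -
  let ?z = "x * a ^ 2 ^ r"
  have "(x + a) ^ (2 ^ r + 1) = x ^ (2 ^ r + 1) + a ^ (2 ^ r + 1) + (?z + ?z ^ 2 ^ r)"
    by (simp add: power_two_power_add_CHAR_2[OF CHAR_2] power_mult_distrib power_two_power_r_twice
        algebra_simps)
  then have "norm_trace r (x + a) = norm_trace r x + norm_trace r a + (trace2 r ?z + trace2 r (?z ^ 2 ^ r))"
    by (simp add: norm_trace_def trace2_add[OF CHAR_2])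
  also have "trace2 r ?z + trace2 r (?z ^ 2 ^ r) = trace2 m ?z"
    by (simp add: m mult_2 trace2_add_length)
  finally show ?thesis .
qed

lemma trace2_polar_commute: "trace2 m ((x :: 'a) * a ^ 2 ^ r) = trace2 m (a * x ^ 2 ^ r)"
  using norm_trace_add[of x a] norm_trace_add[of a x] by (simp add: add.commute)

lemma card_defining_set: "card (defining_set r :: 'a set) = 2 ^ (r - 1) * (2 ^ r - 1)"
proof -
  define K0 where "K0 = {y :: 'a. y ^ 2 ^ r = y \<and> trace2 r y = 0} - {0}"
  define fibre where "fibre y = {x :: 'a. x ^ (2 ^ r + 1) = y}" for y
  have fin: "finite (S :: 'a set)" for S
    using finite_subset[OF subset_UNIV finite_UNIV_field] .
  have "2 * card {y :: 'a. y ^ 2 ^ r = y \<and> trace2 r y = 0} = 2 * 2 ^ (r - 1)"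
    using card_trace2_eq_0_in_subfield[OF CHAR_2 r card_subfield] r by (simp flip: power_Suc)
  then have card_K0: "card K0 = 2 ^ (r - 1) - 1"
    by (simp add: K0_def card_Diff_singleton fin)
  have "defining_set r = insert 0 (\<Union>y\<in>K0. fibre y)"
    using norm_in_subfield by (auto simp: defining_set_def K0_def fibre_def)
  moreover have "0 \<notin> (\<Union>y\<in>K0. fibre y)"
    by (auto simp: K0_def fibre_def)
  moreover have "card (\<Union>y\<in>K0. fibre y) = (\<Sum>y\<in>K0. card (fibre y))"
    by (rule card_UN_disjoint) (auto simp: fin fibre_def)
  moreover have "\<dots> = (2 ^ (r - 1) - 1) * (2 ^ r + 1)"
    using card_norm_fibre card_K0 by (simp add: K0_def fibre_def)
  ultimately have "card (defining_set r :: 'a set) = 1 + (2 ^ (r - 1) - 1) * (2 ^ r + 1)"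
    by (simp add: fin)
  also have "\<dots> = 2 ^ (r - 1) * (2 ^ r - 1)"
  proof -
    obtain s where s: "2 ^ (r - 1) = Suc s" "(2::nat) ^ r = 2 * Suc s"
      using r by (metis Suc_diff_1 not0_implies_Suc power_Suc power_not_zero zero_neq_numeral)
    then show ?thesis
      by (simp add: algebra_simps)
  qed
  finally show ?thesis .
qed

text \<open>The weights of the code: for \<open>a \<noteq> 0\<close> the linear form \<open>x \<mapsto> Tr(x a^(2^r))\<close> has
  \<open>2^(r-1)(2^(r-1)-1)\<close> or \<open>2^(2r-2)\<close> zeros on the quadric, depending on whether \<open>a\<close> lies on it.
  Inclusion--exclusion reduces this to counting the quadric translated by \<open>a\<close>.\<close>

lemma card_defining_set_polar_zeros:
  assumes a: "(a :: 'a) \<noteq> 0"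
  shows "card {x \<in> defining_set r. trace2 m (x * a ^ 2 ^ r) = 0} =
    (if a \<in> defining_set r then 2 ^ (r - 1) * (2 ^ (r - 1) - 1) else 2 ^ (r - 1) * 2 ^ (r - 1))"
proof -
  define s :: nat where "s = 2 ^ (r - 1)"
  let ?D = "defining_set r :: 'a set"
  let ?f = "norm_trace r :: 'a \<Rightarrow> 'a" and ?g = "\<lambda>x. trace2 m (x * a ^ 2 ^ r)"
  have s2: "(2::nat) ^ r = 2 * s"
    using r by (simp add: s_def flip: power_Suc)
  have "(2::nat) ^ m = 2 ^ r * 2 ^ r"
    by (simp add: m mult_2 power_add)
  then have q4: "(2::nat) ^ m = 4 * (s * s)"
    by (simp add: s2)
  have "card ?D = s * (2 * s - 1)"
    using card_defining_set unfolding s_def[symmetric] s2 .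
  then have card_D: "card ?D + s = 2 * (s * s)"
    by (cases s) (simp_all add: algebra_simps)
  have "2 * card {x. ?f x = 0 \<and> ?g x = 0} + card (UNIV :: 'a set) =
      card {x. ?f x = 0} + card {x. ?g x = 0} + card {x. ?f x = ?g x}"
    using card_common_zeros_of_binary_functions[OF finite_UNIV_field, of ?f ?g]
      norm_trace_in_prime_field trace2_m_in_prime_field by simp
  moreover have "{x. ?f x = 0 \<and> ?g x = 0} = {x \<in> ?D. ?g x = 0}" "{x. ?f x = 0} = ?D"
    by (auto simp: defining_set_eq)
  moreover have "2 * card {x. ?g x = 0} = 2 ^ m"
    using card_trace2_linear_form[of "a ^ 2 ^ r"] a by (simp add: mult.commute)
  moreover have "card {x. ?f x = ?g x} = card {y. ?f y = ?f a}"
  proof -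
    have shift: "?f x = ?g x \<longleftrightarrow> ?f (x + a) = ?f a" for x
    proof -
      have "?f (x + a) = (?f x + ?g x) + ?f a"
        using norm_trace_add[of x a] by (simp add: algebra_simps)
      then show ?thesis
        by (simp add: add_eq_0_iff_CHAR_2[OF CHAR_2])
    qed
    have "bij_betw (\<lambda>x. x + a) {x. ?f x = ?g x} {y. ?f y = ?f a}"
    proof (rule bij_betw_byWitness[where f' = "\<lambda>y. y - a"])
      show "(\<lambda>x. x + a) ` {x. ?f x = ?g x} \<subseteq> {y. ?f y = ?f a}"
        using shift by blast
      show "(\<lambda>y. y - a) ` {y. ?f y = ?f a} \<subseteq> {x. ?f x = ?g x}"
        using shift[of "_ - a"] by auto
    qed simp_all
    then show ?thesis
      by (rule bij_betw_same_card)
  qed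
  moreover have complement: "card {y. ?f y = 1} + card ?D = 2 ^ m"
  proof -
    have "{y. ?f y = 1} \<union> ?D = UNIV" "{y. ?f y = 1} \<inter> ?D = {}"
      using norm_trace_in_prime_field by (auto simp: defining_set_eq)
    then show ?thesis
      using card_UNIV finite_UNIV_field by (metis card_Un_disjoint finite_subset subset_UNIV)
  qed
  ultimately have count: "2 * card {x \<in> ?D. ?g x = 0} + 4 * (s * s) =
      card ?D + 2 * (s * s) + card {y. ?f y = ?f a}"
    using card_UNIV q4 by simp
  show ?thesis
  proof (cases "a \<in> ?D")
    case True
    then have "{y. ?f y = ?f a} = ?D"
      by (simp add: defining_set_eq)
    with count card_D have "card {x \<in> ?D. ?g x = 0} = s * s - s"
      by simp
    with True show ?thesis
      by (simp add: s_def diff_mult_distrib2)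
  next
    case False
    then have "?f a = 1"
      using norm_trace_in_prime_field[of a] by (auto simp: defining_set_eq)
    with count card_D complement q4 have "card {x \<in> ?D. ?g x = 0} = s * s"
      by simp
    with False show ?thesis
      by (simp add: s_def)
  qed
qed

end

section \<open>The code \<open>C_D\<close> and its dual\<close>

definition trace_word :: "nat \<Rightarrow> 'a::field set \<Rightarrow> 'a \<Rightarrow> bit \<Rightarrow> 'a \<Rightarrow> bit" where
  "trace_word m D b c = (\<lambda>x. if x \<in> D then to_bit (trace2 m (b * x)) + c else 0)"

lemma code_CD_bar_eq: "code_CD_bar m D = {trace_word m D b c | b c. True}"
  by (simp add: code_CD_bar_def trace_word_def)

lemma to_bit_0 [simp]: "to_bit 0 = 0"
  by (simp add: to_bit_def)

lemma to_bit_1 [simp]: "to_bit 1 = 1"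
  by (simp add: to_bit_def)

lemma to_bit_add:
  assumes "CHAR('a::field) = 2" "t = 0 \<or> t = 1" "u = 0 \<or> u = 1"
  shows "to_bit ((t :: 'a) + u) = to_bit t + to_bit u"
  using assms add_self_CHAR_2[OF assms(1), of 1] by (auto simp: to_bit_def)

context
  fixes r m :: nat and D :: "'a::field set"
  assumes card_UNIV: "card (UNIV :: 'a set) = 2 ^ m" and m: "m = 2 * r" and r: "3 \<le> r"
    and D: "D = defining_set r"
begin

lemma r_pos: "0 < r"
  using r by simp

lemma finite_D: "finite D"
  using finite_subset[OF subset_UNIV finite_UNIV_field[OF card_UNIV m r_pos]] .

lemma zero_in_D: "0 \<in> D"
  by (simp add: D defining_set_eq norm_trace_def power_0_left)

lemma to_bit_trace2_add: "to_bit (trace2 m ((x :: 'a) + y)) = to_bit (trace2 m x) + to_bit (trace2 m y)"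
  using to_bit_add[OF CHAR_2[OF card_UNIV m r_pos] trace2_m_in_prime_field[OF card_UNIV m r_pos]
      trace2_m_in_prime_field[OF card_UNIV m r_pos]]
  by (simp add: trace2_add[OF CHAR_2[OF card_UNIV m r_pos]])

lemma trace_word_add:
  "(\<lambda>x. trace_word m D b c x + trace_word m D b' c' x) = trace_word m D (b + b') (c + c')"
  by (auto simp: fun_eq_iff trace_word_def distrib_right to_bit_trace2_add algebra_simps)

lemma linear_code_CD: "linear_code D (code_CD_bar m D)"
  unfolding linear_code_def code_CD_bar_eq
proof (intro conjI ballI allI)
  show "(\<lambda>_. 0) \<in> {trace_word m D b c |b c. True}"
    by (intro CollectI exI[of _ 0]) (simp add: trace_word_def fun_eq_iff)
  fix u v assume "u \<in> {trace_word m D b c |b c. True}" "v \<in> {trace_word m D b c |b c. True}"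
  then show "(\<lambda>x. u x + v x) \<in> {trace_word m D b c |b c. True}"
    using trace_word_add by blast
next
  fix a :: bit and v assume "v \<in> {trace_word m D b c |b c. True}"
  then show "(\<lambda>x. a * v x) \<in> {trace_word m D b c |b c. True}"
    by (cases a) (auto intro!: exI[of _ 0] simp: trace_word_def fun_eq_iff)
qed (auto simp: finite_D trace_word_def words_def)

text \<open>With \<open>b = a^(2^r)\<close>, hence \<open>a = b^(2^r)\<close>, the zeros of \<open>x \<mapsto> Tr(b x)\<close> on \<open>D\<close> are counted
  by the polar form of the quadric.\<close>

lemma card_trace2_zeros_on_D:
  assumes "b \<noteq> 0"
  shows "card {x \<in> D. trace2 m (b * x) = 0} =
    (if b ^ 2 ^ r \<in> D then 2 ^ (r - 1) * (2 ^ (r - 1) - 1) else 2 ^ (r - 1) * 2 ^ (r - 1))"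
  using card_defining_set_polar_zeros[OF card_UNIV m r_pos, of "b ^ 2 ^ r"] assms
  by (simp add: D power_two_power_r_twice[OF card_UNIV m r_pos] mult.commute)

lemma hweight_trace_word:
  "hweight D (trace_word m D b c) =
    (if c = 0 then card D - card {x \<in> D. trace2 m (b * x) = 0} else card {x \<in> D. trace2 m (b * x) = 0})"
proof -
  have "{x \<in> D. trace_word m D b c x \<noteq> 0} =
      (if c = 0 then D - {x \<in> D. trace2 m (b * x) = 0} else {x \<in> D. trace2 m (b * x) = 0})"
    by (cases c) (auto simp: trace_word_def to_bit_def)
  then show ?thesis
    by (simp add: hweight_def card_Diff_subset finite_D)
qed

lemma card_D: "card D = 2 ^ (r - 1) * (2 ^ r - 1)"
  using card_defining_set[OF card_UNIV m r_pos] by (simp add: D)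

lemma hweight_trace_word_ge:
  assumes "b \<noteq> 0 \<or> c \<noteq> 0"
  shows "2 ^ (r - 1) * (2 ^ (r - 1) - 1) \<le> hweight D (trace_word m D b c)"
proof -
  define s :: nat where "s = 2 ^ (r - 1)"
  have "2 ^ 2 \<le> s"
    unfolding s_def using r by (intro power_increasing) auto
  then have s4: "4 \<le> s"
    by simp
  have "(2::nat) ^ r = 2 * s"
    using r_pos by (simp add: s_def flip: power_Suc)
  then have "card D = s * (2 * s - 1)"
    using card_D unfolding s_def[symmetric] by simp
  then have "card D + s = 2 * (s * s)"
    using s4 by (cases s) (simp_all add: algebra_simps)
  moreover have "s * (s - 1) + s = s * s"
    using s4 by (cases s) simp_all
  moreover have "card {x \<in> D. trace2 m (b * x) = 0} + s = s * s \<or>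
      card {x \<in> D. trace2 m (b * x) = 0} = s * s" if "b \<noteq> 0"
    using card_trace2_zeros_on_D[OF that] \<open>s * (s - 1) + s = s * s\<close>
    unfolding s_def[symmetric] by simp
  ultimately show ?thesis
    using assms s4 unfolding s_def[symmetric] hweight_trace_word
    by (cases "b = 0"; cases "c = 0") (auto simp: trace_word_def)
qed

lemma four_le_power_r: "4 \<le> (2::nat) ^ (r - 1)"
proof -
  have "(2::nat) ^ 2 \<le> 2 ^ (r - 1)"
    using r by (intro power_increasing) auto
  then show ?thesis
    by simp
qed

lemma trace_word_eq_0_iff: "trace_word m D b c = (\<lambda>_. 0) \<longleftrightarrow> b = 0 \<and> c = 0"
proof
  assume "trace_word m D b c = (\<lambda>_. 0)"
  then have "hweight D (trace_word m D b c) = 0"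
    by (simp add: hweight_def)
  moreover have "0 < (2::nat) ^ (r - 1) * (2 ^ (r - 1) - 1)"
    using four_le_power_r by simp
  ultimately show "b = 0 \<and> c = 0"
    using hweight_trace_word_ge[of b c] by linarith
qed (simp add: trace_word_def fun_eq_iff)

lemma card_code_CD: "card (code_CD_bar m D) = 2 ^ (m + 1)"
proof -
  have "code_CD_bar m D = (\<lambda>(b, c). trace_word m D b c) ` UNIV"
    by (auto simp: code_CD_bar_eq)
  moreover have "inj (\<lambda>(b, c). trace_word m D b c)"
  proof (rule injI, clarify)
    fix b b' :: 'a and c c' :: bit
    assume "trace_word m D b c = trace_word m D b' c'"
    have "trace_word m D (b + b') (c + c') = (\<lambda>x. trace_word m D b c x + trace_word m D b' c' x)"
      by (rule trace_word_add[symmetric])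
    also have "\<dots> = (\<lambda>_. 0)"
      using \<open>trace_word m D b c = trace_word m D b' c'\<close> by simp
    finally have "trace_word m D (b + b') (c + c') = (\<lambda>_. 0)" .
    then show "b = b' \<and> c = c'"
      by (simp add: trace_word_eq_0_iff add_eq_0_iff_CHAR_2[OF CHAR_2[OF card_UNIV m r_pos]])
  qed
  ultimately have "card (code_CD_bar m D) = card (UNIV :: ('a \<times> bit) set)"
    by (simp add: card_image)
  also have "\<dots> = 2 ^ m * 2"
    using card_cartesian_product[of "UNIV :: 'a set" "UNIV :: bit set"]
    by (simp add: card_UNIV card_UNIV_bit)
  finally show ?thesis
    by simp
qed

lemma m_less_card_D: "m + 1 \<le> card D"
proof -
  have "r - 1 < 2 ^ (r - 1)"
    by (rule less_exp)
  then have "m + 1 \<le> 2 ^ (r - 1) * 4"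
    using m r by linarith
  also have "\<dots> \<le> 2 ^ (r - 1) * (2 ^ r - 1)"
    using power_increasing[of 3 r "2::nat"] r by (intro mult_le_mono2) simp
  finally show ?thesis
    by (simp add: card_D)
qed

lemma exists_nonzero_in_D: "\<exists>a\<in>D. a \<noteq> 0"
proof (rule ccontr)
  assume "\<not> ?thesis"
  then have "card D \<le> card {0 :: 'a}"
    by (intro card_mono) auto
  with m_less_card_D m r show False
    by simp
qed

lemma hweight_trace_word_min:
  assumes "a \<in> D" "a \<noteq> 0"
  shows "hweight D (trace_word m D (a ^ 2 ^ r) 1) = 2 ^ (r - 1) * (2 ^ (r - 1) - 1)"
  using card_trace2_zeros_on_D[of "a ^ 2 ^ r"] assms
  by (simp add: hweight_trace_word power_two_power_r_twice[OF card_UNIV m r_pos])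

lemma min_dist_code_CD: "min_dist D (code_CD_bar m D) = 2 ^ (r - 1) * (2 ^ (r - 1) - 1)"
proof -
  obtain a where a: "a \<in> D" "a \<noteq> 0"
    using exists_nonzero_in_D by blast
  show ?thesis
  proof (rule min_dist_eqI[OF finite_D])
    fix v assume "v \<in> code_CD_bar m D" "v \<noteq> (\<lambda>_. 0)"
    then show "2 ^ (r - 1) * (2 ^ (r - 1) - 1) \<le> hweight D v"
      using hweight_trace_word_ge trace_word_eq_0_iff by (auto simp: code_CD_bar_eq)
  next
    show "trace_word m D (a ^ 2 ^ r) 1 \<in> code_CD_bar m D"
      by (auto simp: code_CD_bar_eq)
    show "trace_word m D (a ^ 2 ^ r) 1 \<noteq> (\<lambda>_. 0)"
      by (simp add: trace_word_eq_0_iff)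
  qed (rule hweight_trace_word_min[OF a])
qed

lemma card_dual_code_CD: "card (dual_code D (code_CD_bar m D)) = 2 ^ (card D - m - 1)"
proof -
  have "m + 1 + (card D - m - 1) = card D"
    using m_less_card_D by simp
  then have "(2::nat) ^ card D = 2 ^ (m + 1) * 2 ^ (card D - m - 1)"
    by (metis power_add)
  then have "2 ^ (m + 1) * card (dual_code D (code_CD_bar m D)) = 2 ^ (m + 1) * 2 ^ (card D - m - 1)"
    using card_mult_card_dual_code[OF linear_code_CD] by (simp add: card_code_CD)
  then show ?thesis
    by simp
qed

text \<open>Any nonzero \<open>x \<in> D\<close> spans, with some \<open>z\<close>, a 2-dimensional subspace \<open>{0, x, z, x + z} \<subseteq> D\<close>:
  \<open>z\<close> is taken among the more than two zeros of \<open>y \<mapsto> Tr(y x^(2^r))\<close> on \<open>D\<close>.\<close>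

lemma exists_plane_in_D:
  assumes x: "x \<in> D" "x \<noteq> 0"
  shows "\<exists>z\<in>D. z \<noteq> 0 \<and> z \<noteq> x \<and> trace2 m (x * z ^ 2 ^ r) = 0 \<and> x + z \<in> D"
proof -
  let ?Z = "{z \<in> D. trace2 m (x ^ 2 ^ r * z) = 0}"
  have "card {0, x} \<le> (2::nat) * 1"
    by (simp add: card_insert_if)
  also have "\<dots> < 2 ^ (r - 1) * (2 ^ (r - 1) - 1)"
    using four_le_power_r by (intro mult_le_less_imp_less) simp_all
  also have "\<dots> \<le> card ?Z"
    using card_trace2_zeros_on_D[of "x ^ 2 ^ r"] x by (simp split: if_splits)
  finally have "\<not> ?Z \<subseteq> {0, x}"
    using card_mono[of "{0, x}" ?Z] by auto
  then obtain z where z: "z \<in> ?Z" "z \<notin> {0, x}"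
    by blast
  then have "trace2 m (x * z ^ 2 ^ r) = 0"
    using trace2_polar_commute[OF card_UNIV m r_pos, of z x] by (simp add: mult.commute)
  moreover have "x + z \<in> D"
    using z x norm_trace_add[OF card_UNIV m r_pos, of x z] calculation
    by (simp add: D defining_set_eq)
  ultimately show ?thesis
    using z by auto
qed

lemma trace_word_plane_sum:
  assumes "y \<in> D" "z \<in> D" "y + z \<in> D"
  shows "trace_word m D b c 0 + trace_word m D b c y + trace_word m D b c z + trace_word m D b c (y + z) = 0"
  using assms zero_in_D by (simp add: trace_word_def to_bit_trace2_add distrib_left algebra_simps)

definition plane_word :: "'a \<Rightarrow> 'a \<Rightarrow> 'a \<Rightarrow> bit" where
  "plane_word y z = (\<lambda>x. if x \<in> {0, y, z, y + z} then 1 else 0)"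

lemma plane_word_in_dual:
  assumes y: "y \<in> D" "y \<noteq> 0" and z: "z \<in> D" "z \<noteq> 0" "z \<noteq> y" and yz: "y + z \<in> D"
  shows "plane_word y z \<in> dual_code D (code_CD_bar m D)" and "hweight D (plane_word y z) = 4"
proof -
  have "y + z \<noteq> 0" "y + z \<noteq> y" "y + z \<noteq> z"
    using y z add_eq_0_iff_CHAR_2[OF CHAR_2[OF card_UNIV m r_pos], of y z] by auto
  with y z have distinct: "card {0, y, z, y + z} = 4"
    by simp
  have plane: "{0, y, z, y + z} \<subseteq> D"
    using y z yz zero_in_D by auto
  have "{x \<in> D. plane_word y z x \<noteq> 0} = {0, y, z, y + z}"
    using plane by (auto simp: plane_word_def)
  then show "hweight D (plane_word y z) = 4"
    using distinct by (simp add: hweight_def)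
  have "(\<Sum>x\<in>D. plane_word y z x * w x) = 0" if w_code: "w \<in> code_CD_bar m D" for w
  proof -
    obtain b c where w: "w = trace_word m D b c"
      using w_code unfolding code_CD_bar_eq by blast
    have "(\<Sum>x\<in>D. plane_word y z x * w x) = (\<Sum>x\<in>{0, y, z, y + z}. w x)"
      using plane finite_D by (intro sum.mono_neutral_cong_right) (auto simp: plane_word_def)
    also have "\<dots> = w 0 + w y + w z + w (y + z)"
      using \<open>y + z \<noteq> 0\<close> \<open>y + z \<noteq> y\<close> \<open>y + z \<noteq> z\<close> y z by (simp add: add.assoc)
    also have "\<dots> = 0"
      unfolding w by (rule trace_word_plane_sum[OF y(1) z(1) yz])
    finally show ?thesis .
  qed
  with plane show "plane_word y z \<in> dual_code D (code_CD_bar m D)"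
    by (auto simp: dual_code_def words_def plane_word_def)
qed

lemma dual_code_CD_weight_ge_4:
  assumes "v \<in> dual_code D (code_CD_bar m D)" "v \<noteq> (\<lambda>_. 0)"
  shows "4 \<le> hweight D v"
proof (rule dual_code_weight_ge_4[OF finite_D _ _ assms])
  show "(\<lambda>x. if x \<in> D then 1 else 0) \<in> code_CD_bar m D"
    unfolding code_CD_bar_eq
    by (intro CollectI exI[of _ 0] exI[of _ 1]) (simp add: trace_word_def fun_eq_iff)
  fix p q assume "p \<in> D" "q \<in> D" "p \<noteq> q"
  then obtain b where "trace2 m (b * (p + q)) \<noteq> 0"
    using trace2_nondegenerate[OF card_UNIV m r_pos, of "p + q"]
      add_eq_0_iff_CHAR_2[OF CHAR_2[OF card_UNIV m r_pos]] by blast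
  then have "to_bit (trace2 m (b * p)) + to_bit (trace2 m (b * q)) = 1"
    using trace2_m_in_prime_field[OF card_UNIV m r_pos, of "b * (p + q)"]
    by (simp add: distrib_left flip: to_bit_trace2_add)
  then have "trace_word m D b 0 p \<noteq> trace_word m D b 0 q"
    using \<open>p \<in> D\<close> \<open>q \<in> D\<close> by (auto simp: trace_word_def)
  then show "\<exists>w\<in>code_CD_bar m D. w p \<noteq> w q"
    by (auto simp: code_CD_bar_eq)
qed

lemma dual_code_CD_cover:
  assumes "x \<in> D"
  shows "\<exists>u\<in>dual_code D (code_CD_bar m D). u x = 1 \<and> hweight D u = 4"
proof -
  have "\<exists>u\<in>dual_code D (code_CD_bar m D). u 0 = 1 \<and> u y = 1 \<and> hweight D u = 4"
    if y: "y \<in> D" "y \<noteq> 0" for y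
  proof -
    obtain z where "z \<in> D" "z \<noteq> 0" "z \<noteq> y" "y + z \<in> D"
      using exists_plane_in_D[OF y] by blast
    with y show ?thesis
      using plane_word_in_dual by (intro bexI[of _ "plane_word y z"]) (auto simp: plane_word_def)
  qed
  moreover obtain a where "a \<in> D" "a \<noteq> 0"
    using exists_nonzero_in_D by blast
  ultimately show ?thesis
    using assms by (cases "x = 0") blast+
qed

lemma code_CD_cover:
  assumes x: "x \<in> D"
  shows "\<exists>u\<in>code_CD_bar m D. u x = 1 \<and> hweight D u = 2 ^ (r - 1) * (2 ^ (r - 1) - 1)"
proof -
  obtain a where a: "a \<in> D" "a \<noteq> 0" "trace2 m (x * a ^ 2 ^ r) = 0"
  proof (cases "x = 0")
    case True
    then show ?thesis
      using exists_nonzero_in_D that by auto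
  next
    case False
    then show ?thesis
      using exists_plane_in_D[OF x] that by blast
  qed
  then have "trace_word m D (a ^ 2 ^ r) 1 x = 1"
    using x by (simp add: trace_word_def mult.commute)
  moreover have "trace_word m D (a ^ 2 ^ r) 1 \<in> code_CD_bar m D"
    by (auto simp: code_CD_bar_eq)
  ultimately show ?thesis
    using hweight_trace_word_min[OF a(1,2)] by blast
qed

lemma min_dist_dual_code_CD: "min_dist D (dual_code D (code_CD_bar m D)) = 4"
proof -
  obtain y where y: "y \<in> D" "y \<noteq> 0"
    using exists_nonzero_in_D by blast
  then obtain z where z: "z \<in> D" "z \<noteq> 0" "z \<noteq> y" "y + z \<in> D"
    using exists_plane_in_D by blast
  show ?thesis
  proof (rule min_dist_eqI[OF finite_D dual_code_CD_weight_ge_4])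
    show "plane_word y z \<noteq> (\<lambda>_. 0)"
      by (auto simp: plane_word_def fun_eq_iff)
  qed (use plane_word_in_dual[OF y z] in auto)
qed

lemma locality_code_CD: "locality D (code_CD_bar m D) = 3"
  using locality_eq_dual_weight[OF linear_code_CD _ dual_code_CD_weight_ge_4 dual_code_CD_cover]
    zero_in_D by fastforce

lemma locality_dual_code_CD:
  "locality D (dual_code D (code_CD_bar m D)) = 2 ^ (r - 1) * (2 ^ (r - 1) - 1) - 1"
proof (rule locality_eq_dual_weight[OF linear_code_dual_code[OF finite_D]])
  show "D \<noteq> {}"
    using zero_in_D by blast
  fix u assume "u \<in> dual_code D (dual_code D (code_CD_bar m D))" "u \<noteq> (\<lambda>_. 0)"
  moreover from this(1) have "u \<in> code_CD_bar m D"
    by (simp add: dual_code_dual_code[OF linear_code_CD])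
  then obtain b c where "u = trace_word m D b c"
    unfolding code_CD_bar_eq by blast
  ultimately show "2 ^ (r - 1) * (2 ^ (r - 1) - 1) \<le> hweight D u"
    using hweight_trace_word_ge trace_word_eq_0_iff by blast
next
  fix x assume "x \<in> D"
  then show "\<exists>u\<in>dual_code D (dual_code D (code_CD_bar m D)).
      u x = 1 \<and> hweight D u = 2 ^ (r - 1) * (2 ^ (r - 1) - 1)"
    unfolding dual_code_dual_code[OF linear_code_CD] by (rule code_CD_cover)
qed

end

theorem theorem3p10:
  fixes r m :: nat
  assumes "card (UNIV :: ('a::field) set) = 2 ^ m"
    and "r \<ge> 3" and "m = 2 * r"
  defines "D \<equiv> (defining_set r :: 'a set)"
  defines "C \<equiv> code_CD_bar m D"
  shows "is_LRC D C (2^(r-1) * (2^r - 1)) (m + 1) (2^(r-1) * (2^(r-1) - 1)) 2 3 \<and>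
         is_LRC D (dual_code D C) (2^(r-1) * (2^r - 1)) (2^(r-1) * (2^r - 1) - m - 1) 4 2
           (2^(r-1) * (2^(r-1) - 1) - 1) \<and>
         (k_optimal D (dual_code D C) \<or> almost_k_optimal D (dual_code D C))"
proof -
  note setting = assms(1,3,2) D_def[THEN meta_eq_to_obj_eq]
  have code: "is_LRC D C (2^(r-1) * (2^r - 1)) (m + 1) (2^(r-1) * (2^(r-1) - 1)) 2 3"
    using linear_code_CD[OF setting] card_D[OF setting] card_code_CD[OF setting]
      min_dist_code_CD[OF setting] locality_code_CD[OF setting]
    unfolding is_LRC_def is_code_def C_def card_UNIV_bit by blast
  have dual: "is_LRC D (dual_code D C) (2^(r-1) * (2^r - 1)) (2^(r-1) * (2^r - 1) - m - 1) 4 2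
      (2^(r-1) * (2^(r-1) - 1) - 1)"
    using linear_code_dual_code[OF finite_D[OF setting]] card_D[OF setting]
      card_dual_code_CD[OF setting, unfolded card_D[OF setting]] min_dist_dual_code_CD[OF setting]
      locality_dual_code_CD[OF setting]
    unfolding is_LRC_def is_code_def C_def card_UNIV_bit by blast
  have "(2^(r-1) * (2^r - 1) - m - 1) + 1 =
      CM_bound TYPE(bit) (2^(r-1) * (2^r - 1)) 4 (2^(r-1) * (2^(r-1) - 1) - 1)"
    using CM_bound_bit_distance_4[of "r - 1"] m_less_card_D[OF setting] assms(2,3)
    by (simp add: card_D[OF setting])
  then have "almost_k_optimal D (dual_code D C)"
    using dual unfolding almost_k_optimal_def card_UNIV_bit by blast
  with code dual show ?thesis
    by blast
qed

end
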